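(* Let $d=2$, $r\neq0$ and $h(\mathbf{y})=h_1(y_1)h_2(y_2)$ with $h_1,h_2\in\mathcal{S}(\mathbb{R})$. Let $\psi(\mathbf{w})=\int_{\mathbb{R}^2}h(\mathbf{y})\mathcal{F}_\kappa[(|\mathbf{w}\cdot\mathbf{y}|-|\kappa|)^+](r)d\mathbf{y}$ and $\theta:=\psi-\lim_{|\mathbf{w}|\to\infty}\psi(\mathbf{w})$. Then $\theta\in\mathcal{S}_e^{\rm sep}$ and, with $g(\mathbf{w}):=\frac{2}{r^2}\int_{\mathbb{R}^2}h(\mathbf{y})\cos(r\mathbf{w}\cdot\mathbf{y})d\mathbf{y}$, $$T^2(\theta)-\theta(\mathbf0)=\frac{2}{r^2}\int_{\mathbb{R}^2}h(\mathbf{y})d\mathbf{y}-\frac{1}{4\pi^2}\mathrm{PV}\!\!\int\Big(\frac{dw_1}{w_1+1}+\frac{dw_1}{w_1-1}\Big)\mathrm{PV}\!\!\int\Big(\frac{dw_2}{w_2+w_1}-\frac{dw_2}{w_2-w_1}\Big)g(\mathbf{w})$$ $$\qquad-\frac{1}{4\pi^2}\mathrm{PV}\!\!\int\Big(\frac{dw_2}{w_2+1}+\frac{dw_2}{w_2-1}\Big)\mathrm{PV}\!\!\int\Big(\frac{dw_1}{w_1+w_2}-\frac{dw_1}{w_1-w_2}\Big)g(\mathbf{w}).$$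
   Context: $\mathcal{F}_\kappa[u(\kappa)](r)=\int_{\mathbb{R}}u(\kappa)e^{-ir\kappa}d\kappa$. Cauchy principal value: $\mathrm{PV}\!\int\frac{g(w)}{w-c}dw=\lim_{\epsilon\to0+}\int_{|w-c|>\epsilon}\frac{g(w)}{w-c}dw$, and sums of such symbols act by linearity, e.g. $\mathrm{PV}\!\int(\frac{dw_1}{w_1+1}+\frac{dw_1}{w_1-1})\mathrm{PV}\!\int(\frac{dw_2}{w_2+w_1}-\frac{dw_2}{w_2-w_1})g$ means $\sum_{c,\varepsilon\in\{\pm1\}}\varepsilon\,\mathrm{PV}\!\int\frac{dw_1}{w_1+c}\big(\mathrm{PV}\!\int\frac{g(w_1,w_2)}{w_2+\varepsilon w_1}dw_2\big)$. $\mathcal{S}_e^{\rm sep}$ is the linear span of functions $\varphi(\mathbf{w})+\varphi(-\mathbf{w})$ with $\varphi(\mathbf{w})=\varphi_1(w_1)\varphi_2(w_2)$, $\varphi_i\in\mathcal{S}(\mathbb{R})$. $T^2$ is the linear form on $\mathcal{S}_e^{\rm sep}$ $$T^2(\theta)=\frac{1}{4\pi^2}\mathrm{PV}\!\!\int\Big(\frac{dw_1}{w_1+1}+\frac{dw_1}{w_1-1}\Big)\mathrm{PV}\!\!\int\Big(\frac{dw_2}{w_2+w_1}-\frac{dw_2}{w_2-w_1}\Big)\theta(\mathbf{w})+\frac{1}{4\pi^2}\mathrm{PV}\!\!\int\Big(\frac{dw_2}{w_2+1}+\frac{dw_2}{w_2-1}\Big)\mathrm{PV}\!\!\int\Big(\frac{dw_1}{w_1+w_2}-\frac{dw_1}{w_1-w_2}\Big)\theta(\mathbf{w}),$$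 defined first on separable products and extended by linearity. *)

theory Defs
  imports "HOL-Analysis.Analysis"
begin

definition vderiv :: "(real \<Rightarrow> complex) \<Rightarrow> real \<Rightarrow> complex" where
  "vderiv f = (\<lambda>x. vector_derivative f (at x))"

definition schwartz :: "(real \<Rightarrow> complex) \<Rightarrow> bool" where
  "schwartz f \<longleftrightarrow>
     (\<forall>n x. ((vderiv ^^ n) f) differentiable (at x)) \<and>
     (\<forall>m n. bounded (range (\<lambda>x. (x ^ m) *\<^sub>R ((vderiv ^^ n) f x))))"

definition fourier :: "(real \<Rightarrow> complex) \<Rightarrow> real \<Rightarrow> complex" where
  "fourier u r = (LINT \<kappa>|lborel. u \<kappa> * cis (- (r * \<kappa>)))"

definition PV :: "real \<Rightarrow> (real \<Rightarrow> complex) \<Rightarrow> complex" where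
  "PV c g = Lim (at_right 0)
     (\<lambda>\<epsilon>::real. LINT w:{w. \<epsilon> < \<bar>w - c\<bar>}|lborel. g w / complex_of_real (w - c))"

definition Se_sep :: "(real \<times> real \<Rightarrow> complex) set" where
  "Se_sep = {\<theta>. \<exists>(n::nat) (c::nat \<Rightarrow> complex) \<phi>1 \<phi>2.
      (\<forall>i<n. schwartz (\<phi>1 i) \<and> schwartz (\<phi>2 i)) \<and>
      \<theta> = (\<lambda>w. \<Sum>i<n. c i * (\<phi>1 i (fst w) * \<phi>2 i (snd w)
                               + \<phi>1 i (- fst w) * \<phi>2 i (- snd w)))}"

text \<open>The iterated principal-value form T^2 (the formula of the paper, applied
  to the function directly; on S_e^sep this is the linear extension).
  Note 1/(w+a) = 1/(w-(-a)).\<close>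
definition T2 :: "(real \<times> real \<Rightarrow> complex) \<Rightarrow> complex" where
  "T2 \<theta> = complex_of_real (1 / (4 * pi\<^sup>2)) *
     ( (PV (-1) (\<lambda>w1. PV (- w1) (\<lambda>w2. \<theta> (w1, w2)) - PV w1 (\<lambda>w2. \<theta> (w1, w2)))
      + PV 1 (\<lambda>w1. PV (- w1) (\<lambda>w2. \<theta> (w1, w2)) - PV w1 (\<lambda>w2. \<theta> (w1, w2))))
     + (PV (-1) (\<lambda>w2. PV (- w2) (\<lambda>w1. \<theta> (w1, w2)) - PV w2 (\<lambda>w1. \<theta> (w1, w2)))
      + PV 1 (\<lambda>w2. PV (- w2) (\<lambda>w1. \<theta> (w1, w2)) - PV w2 (\<lambda>w1. \<theta> (w1, w2)))))"

end

theory Submission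
  imports Defs "HOL-Probability.Sinc_Integral" "HOL-Probability.Characteristic_Functions" "HOL-Real_Asymp.Real_Asymp"
begin

text \<open>
  The Fourier transform of the tent \<open>\<kappa> \<mapsto> max 0 (A - |\<kappa>|)\<close> is \<open>2 (1 - cos (r A)) / r\<^sup>2\<close>,
  so \<open>\<psi> = (2 / r\<^sup>2) \<integral>h - g\<close>. As \<open>h\<close> is a product, \<open>g\<close> is the even tensor product
  \<open>r\<^sup>-\<^sup>2 (A w\<^sub>1 B w\<^sub>2 + A (-w\<^sub>1) B (-w\<^sub>2))\<close> of the rescaled Fourier transforms \<open>A\<close>, \<open>B\<close> of \<open>h\<^sub>1\<close>,
  \<open>h\<^sub>2\<close>, which are Schwartz functions. Hence \<open>g\<close> vanishes at infinity, \<open>\<theta> = -g\<close> lies in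
  \<open>S\<^sub>e\<^sup>s\<^sup>e\<^sup>p\<close> and \<open>\<theta> 0 = -(2 / r\<^sup>2) \<integral>h\<close>.

  It remains to see \<open>T\<^sup>2 (-g) = - T\<^sup>2 g\<close>. Principal values are limits, so this needs their
  existence. The principal value of a Lipschitz integrable function exists, and for a Schwartz
  function \<open>b\<close> the map \<open>c \<mapsto> PV c b\<close> is bounded and Lipschitz; therefore the inner principal
  values of \<open>g\<close> are Lipschitz integrable in the outer variable as well.
\<close>

section \<open>Schwartz functions\<close>

definition rapid_decay :: "(real \<Rightarrow> complex) \<Rightarrow> bool" where
  "rapid_decay f \<longleftrightarrow> (\<forall>m. \<exists>C. \<forall>x. norm (x ^ m *\<^sub>R f x) \<le> C)"

lemma schwartz_iff_rapid_decay:
  "schwartz f \<longleftrightarrow> (\<forall>n x. (vderiv ^^ n) f differentiable (at x)) \<and> (\<forall>n. rapid_decay ((vderiv ^^ n) f))"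
  unfolding schwartz_def rapid_decay_def bounded_iff by auto

lemma funpow_vderiv_eqI:
  assumes "H 0 = f" "\<And>n x. (H n has_vector_derivative H (Suc n) x) (at x)"
  shows "(vderiv ^^ n) f = H n"
proof (induction n)
  case (Suc n)
  show ?case
    using Suc vector_derivative_at[OF assms(2)] by (auto simp: vderiv_def)
qed (use assms in simp)

lemma schwartzI:
  assumes "H 0 = f" "\<And>n x. (H n has_vector_derivative H (Suc n) x) (at x)" "\<And>n. rapid_decay (H n)"
  shows "schwartz f"
  unfolding schwartz_iff_rapid_decay funpow_vderiv_eqI[of H f, OF assms(1,2)]
  using assms(2,3) differentiableI_vector by blast

lemma schwartz_vderiv: "schwartz f \<Longrightarrow> schwartz (vderiv f)"
proof -
  have "\<And>n. (vderiv ^^ n) (vderiv f) = (vderiv ^^ Suc n) f"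
    by (simp only: funpow_Suc_right o_apply)
  then show "schwartz f \<Longrightarrow> schwartz (vderiv f)" unfolding schwartz_iff_rapid_decay by metis
qed

lemma schwartz_funpow_vderiv: "schwartz f \<Longrightarrow> schwartz ((vderiv ^^ n) f)"
  by (induction n) (auto intro: schwartz_vderiv)

lemma schwartz_has_vector_derivative:
  "schwartz f \<Longrightarrow> (f has_vector_derivative vderiv f x) (at x)"
  unfolding schwartz_iff_rapid_decay vderiv_def
  by (metis funpow_0 vector_derivative_works)

lemma schwartz_funpow_has_vector_derivative:
  "schwartz f \<Longrightarrow> ((vderiv ^^ n) f has_vector_derivative vderiv ((vderiv ^^ n) f) x) (at x)"
  using schwartz_has_vector_derivative[OF schwartz_funpow_vderiv] by simp

lemma schwartz_rapid_decay: "schwartz f \<Longrightarrow> rapid_decay f"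
  unfolding schwartz_iff_rapid_decay by (metis funpow_0)

lemma schwartz_funpow_rapid_decay: "schwartz f \<Longrightarrow> rapid_decay ((vderiv ^^ n) f)"
  by (simp add: schwartz_funpow_vderiv schwartz_rapid_decay)

lemma schwartz_continuous: "schwartz f \<Longrightarrow> continuous_on UNIV f"
  using schwartz_has_vector_derivative
  by (metis continuous_at_imp_continuous_on has_vector_derivative_continuous)

lemma schwartz_measurable: "schwartz f \<Longrightarrow> f \<in> borel_measurable borel"
  by (simp add: borel_measurable_continuous_onI schwartz_continuous)

lemma rapid_decay_add: "rapid_decay f \<Longrightarrow> rapid_decay g \<Longrightarrow> rapid_decay (\<lambda>x. f x + g x)"
  unfolding rapid_decay_def
proof safe
  fix m assume "\<forall>m. \<exists>C. \<forall>x. norm (x ^ m *\<^sub>R f x) \<le> C" "\<forall>m. \<exists>C. \<forall>x. norm (x ^ m *\<^sub>R g x) \<le> C"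
  then obtain C D where "\<forall>x. norm (x ^ m *\<^sub>R f x) \<le> C" "\<forall>x. norm (x ^ m *\<^sub>R g x) \<le> D" by blast
  then show "\<exists>C. \<forall>x. norm (x ^ m *\<^sub>R (f x + g x)) \<le> C"
    by (intro exI[of _ "C + D"]) (metis add_mono norm_triangle_ineq order_trans scaleR_right_distrib)
qed

lemma rapid_decay_cmult: "rapid_decay f \<Longrightarrow> rapid_decay (\<lambda>x. c * f x)"
  unfolding rapid_decay_def
proof safe
  fix m assume "\<forall>m. \<exists>C. \<forall>x. norm (x ^ m *\<^sub>R f x) \<le> C"
  then obtain C where "\<forall>x. norm (x ^ m *\<^sub>R f x) \<le> C" by blast
  then have "norm (x ^ m *\<^sub>R (c * f x)) \<le> norm c * C" for x
  proof -
    have "norm (x ^ m *\<^sub>R (c * f x)) = norm c * norm (x ^ m *\<^sub>R f x)"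
      by (simp add: norm_mult)
    also have "\<dots> \<le> norm c * C" using \<open>\<forall>x. norm (x ^ m *\<^sub>R f x) \<le> C\<close> by (simp add: mult_left_mono)
    finally show ?thesis .
  qed
  then show "\<exists>C. \<forall>x. norm (x ^ m *\<^sub>R (c * f x)) \<le> C" by blast
qed

lemma rapid_decay_xmult: "rapid_decay f \<Longrightarrow> rapid_decay (\<lambda>x. complex_of_real x * f x)"
  unfolding rapid_decay_def
proof safe
  fix m assume "\<forall>m. \<exists>C. \<forall>x. norm (x ^ m *\<^sub>R f x) \<le> C"
  then obtain C where "\<forall>x. norm (x ^ Suc m *\<^sub>R f x) \<le> C" by blast
  then show "\<exists>C. \<forall>x. norm (x ^ m *\<^sub>R (complex_of_real x * f x)) \<le> C"
    by (intro exI[of _ C]) (auto simp: norm_mult abs_mult mult_ac)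
qed

lemma rapid_decay_scale:
  assumes "rapid_decay f" "a \<noteq> 0"
  shows "rapid_decay (\<lambda>x. f (a * x))"
  unfolding rapid_decay_def
proof
  fix m
  obtain C where C: "\<forall>x. norm (x ^ m *\<^sub>R f x) \<le> C" using assms(1) unfolding rapid_decay_def by blast
  have "norm (x ^ m *\<^sub>R f (a * x)) \<le> C / \<bar>a\<bar> ^ m" for x
  proof -
    have "norm (x ^ m *\<^sub>R f (a * x)) * \<bar>a\<bar> ^ m = norm ((a * x) ^ m *\<^sub>R f (a * x))"
      by (simp add: power_mult_distrib abs_mult power_abs)
    also have "\<dots> \<le> C" using C by blast
    finally show ?thesis using assms(2) by (simp add: field_simps)
  qed
  then show "\<exists>C. \<forall>x. norm (x ^ m *\<^sub>R f (a * x)) \<le> C" by blast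
qed

lemma rapid_decay_bound:
  assumes "rapid_decay f"
  obtains C where "0 \<le> C" "\<And>x. norm (f x) \<le> C * inverse (1 + x\<^sup>2)"
proof -
  obtain A where A: "\<forall>x. norm (x ^ 0 *\<^sub>R f x) \<le> A" using assms unfolding rapid_decay_def by blast
  obtain B where B: "\<forall>x. norm (x ^ 2 *\<^sub>R f x) \<le> B" using assms unfolding rapid_decay_def by blast
  have "norm (f x) \<le> (A + B) * inverse (1 + x\<^sup>2)" for x
  proof -
    have "(1 + x\<^sup>2) * norm (f x) = norm (x ^ 0 *\<^sub>R f x) + norm (x ^ 2 *\<^sub>R f x)"
      by (simp add: algebra_simps)
    also have "\<dots> \<le> A + B" using A B by (intro add_mono) auto
    finally show ?thesis by (simp add: field_simps add_pos_nonneg)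
  qed
  moreover have "0 \<le> A + B" using A B by (metis add_mono norm_ge_zero order_trans add_0)
  ultimately show ?thesis using that by blast
qed

lemma rapid_decay_bounded: "rapid_decay f \<Longrightarrow> bounded (range f)"
  unfolding rapid_decay_def bounded_iff by (metis power_0 scaleR_one image_iff)

lemma rapid_decay_tendsto_0:
  assumes "rapid_decay f" shows "(f \<longlongrightarrow> 0) at_top" "(f \<longlongrightarrow> 0) at_bot"
proof -
  obtain C where "\<And>x. norm (f x) \<le> C * inverse (1 + x\<^sup>2)" using rapid_decay_bound[OF assms] by blast
  moreover have "((\<lambda>x::real. C * inverse (1 + x\<^sup>2)) \<longlongrightarrow> 0) at_top"
    "((\<lambda>x::real. C * inverse (1 + x\<^sup>2)) \<longlongrightarrow> 0) at_bot" by real_asymp+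
  ultimately show "(f \<longlongrightarrow> 0) at_top" "(f \<longlongrightarrow> 0) at_bot"
    by (auto intro!: Lim_null_comparison[where g="\<lambda>x. C * inverse (1 + x\<^sup>2)"])
qed

lemma integrable_inverse_1_plus_square_lborel: "integrable lborel (\<lambda>x::real. inverse (1 + x\<^sup>2))"
  using integrable_inverse_1_plus_square by (simp add: set_integrable_def)

lemma rapid_decay_integrable:
  assumes "rapid_decay f" "f \<in> borel_measurable borel"
  shows "integrable lborel f"
proof -
  obtain C where C: "\<And>x. norm (f x) \<le> C * inverse (1 + x\<^sup>2)" using rapid_decay_bound[OF assms(1)] by blast
  show ?thesis
  proof (rule Bochner_Integration.integrable_bound)
    show "integrable lborel (\<lambda>x. C * inverse (1 + x\<^sup>2))"
      using integrable_inverse_1_plus_square_lborel by simp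
    show "AE x in lborel. norm (f x) \<le> norm (C * inverse (1 + x\<^sup>2))"
      using C by (intro AE_I2) (metis abs_ge_self order_trans real_norm_def)
  qed (use assms(2) in simp)
qed

lemma schwartz_integrable: "schwartz f \<Longrightarrow> integrable lborel f"
  by (simp add: rapid_decay_integrable schwartz_measurable schwartz_rapid_decay)

lemma schwartz_cmult: assumes "schwartz f" shows "schwartz (\<lambda>x. c * f x)"
  by (rule schwartzI[where H="\<lambda>n x. c * (vderiv ^^ n) f x"])
     (simp_all add: has_vector_derivative_mult_right schwartz_funpow_has_vector_derivative
        rapid_decay_cmult schwartz_funpow_rapid_decay assms)

lemma schwartz_xmult: assumes "schwartz f" shows "schwartz (\<lambda>x. complex_of_real x * f x)"
proof (rule schwartzI[where H="\<lambda>n x. complex_of_real x * (vderiv ^^ n) f x + of_nat n * (vderiv ^^ (n - 1)) f x"])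
  \<comment> \<open>Leibniz rule; the truncated \<open>n - 1\<close> is harmless at \<open>n = 0\<close>, where its coefficient vanishes.\<close>
  fix n :: nat and x :: real
  have "((\<lambda>x. complex_of_real x) has_vector_derivative 1) (at x)"
    using has_vector_derivative_of_real[OF DERIV_ident] by simp
  then have d1: "((\<lambda>x. complex_of_real x * (vderiv ^^ n) f x) has_vector_derivative
      (complex_of_real x * vderiv ((vderiv ^^ n) f) x + 1 * (vderiv ^^ n) f x)) (at x)"
    by (rule has_vector_derivative_mult[OF _ schwartz_funpow_has_vector_derivative[OF assms]])
  have d2: "((\<lambda>x. of_nat n * (vderiv ^^ (n - 1)) f x) has_vector_derivative
      of_nat n * (vderiv ^^ n) f x) (at x)"
    using has_vector_derivative_mult_right[OF schwartz_funpow_has_vector_derivative[OF assms, of "n - 1" x]]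
    by (cases n) auto
  show "((\<lambda>x. complex_of_real x * (vderiv ^^ n) f x + of_nat n * (vderiv ^^ (n - 1)) f x) has_vector_derivative
     complex_of_real x * (vderiv ^^ Suc n) f x + of_nat (Suc n) * (vderiv ^^ (Suc n - 1)) f x) (at x)"
    using has_vector_derivative_add[OF d1 d2] by (simp add: algebra_simps)
next
  show "rapid_decay (\<lambda>x. complex_of_real x * (vderiv ^^ n) f x + of_nat n * (vderiv ^^ (n - 1)) f x)" for n
    by (intro rapid_decay_add rapid_decay_xmult rapid_decay_cmult schwartz_funpow_rapid_decay[OF assms])
qed simp

lemma schwartz_xpow: assumes "schwartz f" shows "schwartz (\<lambda>x. complex_of_real x ^ k * f x)"
proof (induction k)
  case (Suc k)
  from schwartz_xmult[OF this] show ?case by (simp add: mult.assoc)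
qed (simp add: assms)

lemma schwartz_scale: assumes "schwartz f" "a \<noteq> 0" shows "schwartz (\<lambda>x. f (a * x))"
proof (rule schwartzI[where H="\<lambda>n x. complex_of_real a ^ n * (vderiv ^^ n) f (a * x)"])
  fix n x
  have "((\<lambda>x. a * x) has_vector_derivative a) (at x)"
    using has_real_derivative_iff_has_vector_derivative DERIV_cmult_Id by blast
  from vector_diff_chain_at[OF this schwartz_funpow_has_vector_derivative[OF assms(1)]]
  have "(((vderiv ^^ n) f \<circ> (\<lambda>x. a * x)) has_vector_derivative (a *\<^sub>R vderiv ((vderiv ^^ n) f) (a * x))) (at x)" .
  from has_vector_derivative_mult_right[OF this, of "complex_of_real a ^ n"]
  show "((\<lambda>x. complex_of_real a ^ n * (vderiv ^^ n) f (a * x)) has_vector_derivative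
         complex_of_real a ^ Suc n * (vderiv ^^ Suc n) f (a * x)) (at x)"
    by (simp add: o_def scaleR_conv_of_real mult_ac)
next
  show "rapid_decay (\<lambda>x. complex_of_real a ^ n * (vderiv ^^ n) f (a * x))" for n
    by (intro rapid_decay_cmult rapid_decay_scale[OF _ assms(2)] schwartz_funpow_rapid_decay[OF assms(1)])
qed simp

lemma schwartz_reflect: "schwartz f \<Longrightarrow> schwartz (\<lambda>x. f (- x))"
  using schwartz_scale[of f "-1"] by simp

lemma lipschitz_on_if_vector_derivative_bounded:
  fixes g :: "real \<Rightarrow> 'a::real_normed_vector"
  assumes "convex S" "\<And>x. x \<in> S \<Longrightarrow> (g has_vector_derivative g' x) (at x)"
    "\<And>x. x \<in> S \<Longrightarrow> norm (g' x) \<le> B" "0 \<le> B"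
  shows "B-lipschitz_on S g"
proof (rule bounded_derivative_imp_lipschitz[OF _ assms(1) _ assms(4)])
  show "(g has_derivative (\<lambda>h. h *\<^sub>R g' x)) (at x within S)" if "x \<in> S" for x
    using assms(2)[OF that] by (simp add: has_vector_derivative_def has_derivative_at_withinI)
  show "onorm (\<lambda>h. h *\<^sub>R g' x) \<le> B" if "x \<in> S" for x
    using assms(3)[OF that] by (simp add: onorm_scaleR_left[OF bounded_linear_ident] onorm_id)
qed

lemma schwartz_lipschitz:
  assumes "schwartz f" obtains L where "L-lipschitz_on UNIV f"
proof -
  obtain B where "\<And>x. norm (vderiv f x) \<le> B"
    using rapid_decay_bounded[OF schwartz_rapid_decay[OF schwartz_vderiv[OF assms]]]
    by (auto simp: bounded_iff)
  then have "B-lipschitz_on UNIV f"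
    using schwartz_has_vector_derivative[OF assms] order_trans[OF norm_ge_zero]
    by (intro lipschitz_on_if_vector_derivative_bounded) auto
  then show ?thesis by (rule that)
qed

section \<open>The Fourier transform\<close>

lemma has_vector_derivative_at_quotientI:
  fixes f :: "real \<Rightarrow> 'a::real_normed_vector"
  assumes "((\<lambda>h. (f (x + h) - f x) /\<^sub>R h) \<longlongrightarrow> D) (at 0)"
  shows "(f has_vector_derivative D) (at x)"
proof -
  have "((\<lambda>h. norm ((f (x + h) - f x) /\<^sub>R h - D)) \<longlongrightarrow> 0) (at 0)"
    using assms tendsto_norm_zero_iff[of "\<lambda>h. (f (x + h) - f x) /\<^sub>R h - D"] 
    by (simp add: Lim_null[symmetric])
  then have "((\<lambda>h. norm (f (x + h) - f x - h *\<^sub>R D) / norm h) \<longlongrightarrow> 0) (at 0)"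
  proof (rule Lim_transform_eventually)
    show "\<forall>\<^sub>F h in at 0. norm ((f (x + h) - f x) /\<^sub>R h - D) = norm (f (x + h) - f x - h *\<^sub>R D) / norm h"
    proof -
      have "norm ((f (x + h) - f x) /\<^sub>R h - D) = norm (f (x + h) - f x - h *\<^sub>R D) / norm h"
        if "h \<noteq> 0" for h
      proof -
        have "(f (x + h) - f x) /\<^sub>R h - D = (f (x + h) - f x - h *\<^sub>R D) /\<^sub>R h"
          using that by (simp add: algebra_simps)
        then show ?thesis
          using that by (simp add: divide_inverse mult.commute)
      qed
      then show ?thesis unfolding eventually_at_filter by (auto intro!: always_eventually)
    qed
  qed
  then have "((\<lambda>y. norm (f y - f x - (y - x) *\<^sub>R D) / norm (y - x)) \<longlongrightarrow> 0) (at x)"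
    using LIM_offset_zero_cancel[of "\<lambda>y. norm (f y - f x - (y - x) *\<^sub>R D) / norm (y - x)" x 0] by simp
  then show ?thesis
    unfolding has_vector_derivative_def has_derivative_iff_norm
    by (auto intro: bounded_linear_scaleR_left)
qed

lemma integrable_mult_cis:
  assumes "integrable lborel f" and that: "a \<in> borel_measurable borel"
  shows "integrable lborel (\<lambda>y. f y * cis (a y))"
proof (rule Bochner_Integration.integrable_bound[OF assms(1)])
  have [measurable]: "f \<in> borel_measurable borel" using assms by simp
  have [measurable]: "a \<in> borel_measurable borel" using that .
  have "continuous_on UNIV cis" by (auto simp: cis_conv_exp intro!: continuous_intros)
  then have [measurable]: "cis \<in> borel_measurable borel" by (rule borel_measurable_continuous_onI)
  show "(\<lambda>y. f y * cis (a y)) \<in> borel_measurable lborel" by measurable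
  show "AE x in lborel. norm (f x * cis (a x)) \<le> norm (f x)" by (simp add: norm_mult)
qed

lemma integrable_fourier_integrand:
  "integrable lborel f \<Longrightarrow> integrable lborel (\<lambda>y. f y * cis (- (t * y)))"
  by (rule integrable_mult_cis) auto

lemma norm_cis_minus_linear_le: "norm (cis a - 1 - \<i> * a) \<le> a\<^sup>2 / 2"
  using iexp_approx1[of a 1] by (simp add: cis_conv_exp power2_eq_square algebra_simps)

lemma norm_fourier_difference_quotient_le:
  assumes f: "integrable lborel f" and f1: "integrable lborel (\<lambda>y. complex_of_real y * f y)"
    and f2: "integrable lborel (\<lambda>y. complex_of_real y ^ 2 * f y)" and h: "h \<noteq> 0"
  shows "norm ((fourier f (\<xi> + h) - fourier f \<xi>) /\<^sub>R h - fourier (\<lambda>y. - \<i> * (complex_of_real y * f y)) \<xi>)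
    \<le> \<bar>h\<bar> * ((LINT y|lborel. norm (complex_of_real y ^ 2 * f y)) / 2)"
proof -
  define q where "q y = f y * cis (- (\<xi> * y)) * ((cis (- (h * y)) - 1 - \<i> * (- (h * y))) / h)" for y
  have i1: "integrable lborel (\<lambda>y. f y * cis (- ((\<xi> + h) * y)))" by (rule integrable_fourier_integrand[OF f])
  have i2: "integrable lborel (\<lambda>y. f y * cis (- (\<xi> * y)))" by (rule integrable_fourier_integrand[OF f])
  have i3: "integrable lborel (\<lambda>y. - \<i> * (complex_of_real y * f y) * cis (- (\<xi> * y)))"
    using integrable_fourier_integrand[OF integrable_mult_right[OF f1, of "- \<i>"]] by simp
  have qe: "q y = (f y * cis (- ((\<xi> + h) * y)) - f y * cis (- (\<xi> * y))) / h
       - - \<i> * (complex_of_real y * f y) * cis (- (\<xi> * y))" for y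
  proof -
    have "cis (- ((\<xi> + h) * y)) = cis (- (\<xi> * y)) * cis (- (h * y))"
      by (simp add: cis_mult distrib_right)
    then show ?thesis unfolding q_def using h by (simp add: field_simps)
  qed
  have "(fourier f (\<xi> + h) - fourier f \<xi>) /\<^sub>R h - fourier (\<lambda>y. - \<i> * (complex_of_real y * f y)) \<xi> =
      (LINT y|lborel. (f y * cis (- ((\<xi> + h) * y)) - f y * cis (- (\<xi> * y))) / h
       - - \<i> * (complex_of_real y * f y) * cis (- (\<xi> * y)))"
    unfolding fourier_def using i1 i2 i3
    by (simp add: scaleR_conv_of_real Bochner_Integration.integral_diff integral_divide_zero
        divide_inverse mult.commute)
  also have "\<dots> = (LINT y|lborel. q y)" by (simp add: qe)
  also have "norm \<dots> \<le> (LINT y|lborel. \<bar>h\<bar> * (norm (complex_of_real y ^ 2 * f y) / 2))"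
  proof (rule Bochner_Integration.integral_norm_bound_integral)
    show "integrable lborel q" unfolding qe[abs_def] using i1 i2 i3 by simp
    show "integrable lborel (\<lambda>y. \<bar>h\<bar> * (norm (complex_of_real y ^ 2 * f y) / 2))"
      using integrable_norm[OF f2] by simp
    show "norm (q y) \<le> \<bar>h\<bar> * (norm (complex_of_real y ^ 2 * f y) / 2)" for y
    proof -
      have "norm (q y) = norm (f y) * (norm (cis (- (h * y)) - 1 - \<i> * (- (h * y))) / \<bar>h\<bar>)"
        unfolding q_def by (simp add: norm_mult norm_divide)
      also have "\<dots> \<le> norm (f y) * ((- (h * y))\<^sup>2 / 2 / \<bar>h\<bar>)"
        by (intro mult_left_mono divide_right_mono norm_cis_minus_linear_le) auto
      also have "\<dots> = \<bar>h\<bar> * (norm (complex_of_real y ^ 2 * f y) / 2)"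
        using h by (simp add: norm_mult power2_eq_square abs_mult field_simps)
      finally show ?thesis .
    qed
  qed
  finally show ?thesis by simp
qed

lemma has_vector_derivative_fourier:
  assumes f: "integrable lborel f" and f1: "integrable lborel (\<lambda>y. complex_of_real y * f y)"
    and f2: "integrable lborel (\<lambda>y. complex_of_real y ^ 2 * f y)"
  shows "(fourier f has_vector_derivative fourier (\<lambda>y. - \<i> * (complex_of_real y * f y)) \<xi>) (at \<xi>)"
proof (rule has_vector_derivative_at_quotientI)
  let ?D = "fourier (\<lambda>y. - \<i> * (complex_of_real y * f y)) \<xi>"
  let ?K = "(LINT y|lborel. norm (complex_of_real y ^ 2 * f y)) / 2"
  have "((\<lambda>h. (fourier f (\<xi> + h) - fourier f \<xi>) /\<^sub>R h - ?D) \<longlongrightarrow> 0) (at 0)"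
  proof (rule Lim_null_comparison)
    show "\<forall>\<^sub>F h in at 0. norm ((fourier f (\<xi> + h) - fourier f \<xi>) /\<^sub>R h - ?D) \<le> \<bar>h\<bar> * ?K"
      using norm_fourier_difference_quotient_le[OF f f1 f2]
      unfolding eventually_at_filter by (auto intro!: always_eventually)
    show "((\<lambda>h. \<bar>h\<bar> * ?K) \<longlongrightarrow> 0) (at 0)"
      by (intro tendsto_mult_left_zero tendsto_rabs_zero tendsto_ident_at)
  qed
  then show "((\<lambda>h. (fourier f (\<xi> + h) - fourier f \<xi>) /\<^sub>R h) \<longlongrightarrow> ?D) (at 0)"
    using Lim_null by blast
qed

lemma integral_lborel_derivative_eq_0:
  fixes f F :: "real \<Rightarrow> complex"
  assumes F: "\<And>x. (F has_vector_derivative f x) (at x)"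
    and f: "\<And>x. isCont f x" and fi: "integrable lborel f"
    and t: "(F \<longlongrightarrow> 0) at_top" and b: "(F \<longlongrightarrow> 0) at_bot"
  shows "integral\<^sup>L lborel f = 0"
proof -
  have e: "einterval (-\<infinity>) \<infinity> = UNIV" by (auto simp: einterval_iff)
  have "(LBINT x=-\<infinity>..\<infinity>. f x) = 0 - 0"
    by (rule interval_integral_FTC_integrable[where F=F])
       (use F f fi t b in \<open>auto simp: e set_integrable_def ereal_tendsto_simps\<close>)
  then show ?thesis by (simp add: interval_lebesgue_integral_def e set_lebesgue_integral_def)
qed

lemma has_vector_derivative_cis_linear: "((\<lambda>y. cis (- (\<xi> * y))) has_vector_derivative (- \<i> * complex_of_real \<xi> * cis (- (\<xi> * y)))) (at y)"
proof -
  have d: "((\<lambda>y. - (\<xi> * y)) has_vector_derivative (- \<xi>)) (at y)"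
    using has_real_derivative_iff_has_vector_derivative
    by (metis DERIV_cmult_Id DERIV_minus)
  have "((iexp \<circ> (\<lambda>y. - (\<xi> * y))) has_vector_derivative ((- \<xi>) *\<^sub>R (\<i> * iexp (- (\<xi> * y))))) (at y)"
    by (rule vector_diff_chain_at[OF d has_vector_derivative_iexp])
  then show ?thesis by (simp add: o_def cis_conv_exp scaleR_conv_of_real mult_ac)
qed

lemma isCont_cis_linear: "isCont (\<lambda>y. cis (- (\<xi> * y))) y"
  by (auto simp: cis_conv_exp intro!: continuous_intros)

lemma fourier_vderiv:
  assumes u: "schwartz u"
  shows "fourier (vderiv u) \<xi> = \<i> * complex_of_real \<xi> * fourier u \<xi>"
proof -
  define p' where "p' y = vderiv u y * cis (- (\<xi> * y)) + u y * (- \<i> * complex_of_real \<xi> * cis (- (\<xi> * y)))" for y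
  have du: "(u has_vector_derivative vderiv u y) (at y)" for y by (rule schwartz_has_vector_derivative[OF u])
  have dp: "((\<lambda>y. u y * cis (- (\<xi> * y))) has_vector_derivative p' y) (at y)" for y
    using has_vector_derivative_mult[OF du has_vector_derivative_cis_linear] unfolding p'_def
    by (rule has_vector_derivative_eq_rhs) (simp add: algebra_simps)
  have iu: "integrable lborel u" by (rule schwartz_integrable[OF u])
  have iu': "integrable lborel (vderiv u)" by (rule schwartz_integrable[OF schwartz_vderiv[OF u]])
  have i1: "integrable lborel (\<lambda>y. vderiv u y * cis (- (\<xi> * y)))" by (rule integrable_fourier_integrand[OF iu'])
  have i2: "integrable lborel (\<lambda>y. u y * cis (- (\<xi> * y)))" by (rule integrable_fourier_integrand[OF iu])
  have i2': "integrable lborel (\<lambda>y. u y * (- \<i> * complex_of_real \<xi> * cis (- (\<xi> * y))))"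
    using integrable_mult_right[OF i2, of "- \<i> * complex_of_real \<xi>"] by (simp add: mult_ac)
  have cu: "isCont (vderiv u) y" "isCont u y" for y
    using schwartz_continuous[OF schwartz_vderiv[OF u]] schwartz_continuous[OF u] by (auto simp: continuous_on_eq_continuous_at)
  have "integral\<^sup>L lborel p' = 0"
  proof (rule integral_lborel_derivative_eq_0[OF dp])
    show "isCont p' x" for x unfolding p'_def using cu by (auto intro!: continuous_intros isCont_cis_linear)
    show "integrable lborel p'" unfolding p'_def using i1 i2' by simp
    have rdu: "rapid_decay u" by (rule schwartz_rapid_decay[OF u])
    have nb: "norm (u y * cis (- (\<xi> * y))) = norm (u y)" for y by (simp add: norm_mult)
    show "((\<lambda>y. u y * cis (- (\<xi> * y))) \<longlongrightarrow> 0) at_top"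
      using rapid_decay_tendsto_0(1)[OF rdu] by (subst tendsto_norm_zero_iff[symmetric]) (simp add: nb tendsto_norm_zero_iff)
    show "((\<lambda>y. u y * cis (- (\<xi> * y))) \<longlongrightarrow> 0) at_bot"
      using rapid_decay_tendsto_0(2)[OF rdu] by (subst tendsto_norm_zero_iff[symmetric]) (simp add: nb tendsto_norm_zero_iff)
  qed
  moreover have "integral\<^sup>L lborel p' = fourier (vderiv u) \<xi> + (- \<i> * complex_of_real \<xi>) * fourier u \<xi>"
    unfolding p'_def fourier_def using i1 i2 i2'
    by (simp add: Bochner_Integration.integral_add mult_ac)
  ultimately show ?thesis by (simp add: algebra_simps add_eq_0_iff)
qed

lemma fourier_funpow_vderiv:
  assumes u: "schwartz u"
  shows "fourier ((vderiv ^^ m) u) \<xi> = (\<i> * complex_of_real \<xi>) ^ m * fourier u \<xi>"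
proof (induction m)
  case 0 then show ?case by simp
next
  case (Suc m)
  have "fourier ((vderiv ^^ Suc m) u) \<xi> = fourier (vderiv ((vderiv ^^ m) u)) \<xi>" by simp
  also have "\<dots> = \<i> * complex_of_real \<xi> * fourier ((vderiv ^^ m) u) \<xi>"
    by (rule fourier_vderiv[OF schwartz_funpow_vderiv[OF u]])
  finally show ?case using Suc by simp
qed

lemma norm_fourier_le:
  assumes "integrable lborel f"
  shows "norm (fourier f \<xi>) \<le> (LINT y|lborel. norm (f y))"
  unfolding fourier_def
  using Bochner_Integration.integral_norm_bound_integral[OF integrable_fourier_integrand[OF assms] integrable_norm[OF assms]]
  by (simp add: norm_mult)

lemma schwartz_fourier:
  assumes f: "schwartz f"
  shows "schwartz (fourier f)"
proof -
  define g where "g n y = (- \<i>) ^ n * (complex_of_real y ^ n * f y)" for n y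
  have sg: "schwartz (g n)" for n
    unfolding g_def by (intro schwartz_cmult schwartz_xpow f)
  have ig: "integrable lborel (g n)" for n by (rule schwartz_integrable[OF sg])
  have ig1: "integrable lborel (\<lambda>y. complex_of_real y * g n y)" for n
    using schwartz_integrable[OF schwartz_xpow[OF sg, of 1]] by simp
  have ig2: "integrable lborel (\<lambda>y. complex_of_real y ^ 2 * g n y)" for n
    using schwartz_integrable[OF schwartz_xpow[OF sg, of 2]] by simp
  have gs: "(\<lambda>y. - \<i> * (complex_of_real y * g n y)) = g (Suc n)" for n
    unfolding g_def by (auto simp: mult_ac)
  show ?thesis
  proof (rule schwartzI[where H="\<lambda>n. fourier (g n)"])
    show "fourier (g 0) = fourier f" unfolding g_def by simp
    show "(fourier (g n) has_vector_derivative fourier (g (Suc n)) x) (at x)" for n x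
      using has_vector_derivative_fourier[OF ig ig1 ig2, where \<xi>=x] gs by simp
    show "rapid_decay (fourier (g n))" for n
      unfolding rapid_decay_def
    proof
      fix m
      show "\<exists>C. \<forall>x. norm (x ^ m *\<^sub>R fourier (g n) x) \<le> C"
      proof (intro exI allI)
        fix x
        have "norm (x ^ m *\<^sub>R fourier (g n) x) = norm ((\<i> * complex_of_real x) ^ m * fourier (g n) x)"
          by (simp add: norm_mult norm_power power_abs)
        also have "\<dots> = norm (fourier ((vderiv ^^ m) (g n)) x)" by (simp add: fourier_funpow_vderiv[OF sg])
        also have "\<dots> \<le> (LINT y|lborel. norm ((vderiv ^^ m) (g n) y))"
          by (rule norm_fourier_le[OF schwartz_integrable[OF schwartz_funpow_vderiv[OF sg]]])
        finally show "norm (x ^ m *\<^sub>R fourier (g n) x) \<le> (LINT y|lborel. norm ((vderiv ^^ m) (g n) y))" .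
      qed
    qed
  qed
qed

lemma has_vector_derivative_tent_primitive_right:
  assumes r: "r \<noteq> 0"
  shows "((\<lambda>k. \<i> / complex_of_real r * (complex_of_real (A - k) * cis (- (r * k))) - 1 / complex_of_real r ^ 2 * cis (- (r * k)))
     has_vector_derivative (complex_of_real (A - k) * cis (- (r * k)))) (at k)"
proof -
  have d0: "((\<lambda>k. complex_of_real (A - k)) has_vector_derivative - 1) (at k)"
    using has_vector_derivative_of_real[of "\<lambda>k. A - k" "-1"] by (auto intro!: derivative_eq_intros)
  have "((\<lambda>k. \<i> / complex_of_real r * (complex_of_real (A - k) * cis (- (r * k))) - 1 / complex_of_real r ^ 2 * cis (- (r * k)))
     has_vector_derivative (\<i> / complex_of_real r * (complex_of_real (A - k) * (- \<i> * complex_of_real r * cis (- (r * k))) + (- 1) * cis (- (r * k)))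
        - 1 / complex_of_real r ^ 2 * (- \<i> * complex_of_real r * cis (- (r * k))))) (at k)"
    by (intro has_vector_derivative_diff has_vector_derivative_mult_right has_vector_derivative_mult d0 has_vector_derivative_cis_linear)
  then show ?thesis
    by (rule has_vector_derivative_eq_rhs) (use r in \<open>simp add: field_simps power2_eq_square\<close>)
qed

lemma has_vector_derivative_tent_primitive_left:
  assumes r: "r \<noteq> 0"
  shows "((\<lambda>k. \<i> / complex_of_real r * (complex_of_real (A + k) * cis (- (r * k))) + 1 / complex_of_real r ^ 2 * cis (- (r * k)))
     has_vector_derivative (complex_of_real (A + k) * cis (- (r * k)))) (at k)"
proof -
  have d0: "((\<lambda>k. complex_of_real (A + k)) has_vector_derivative 1) (at k)"
    using has_vector_derivative_of_real[of "\<lambda>k. A + k" "1"] by (auto intro!: derivative_eq_intros)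
  have "((\<lambda>k. \<i> / complex_of_real r * (complex_of_real (A + k) * cis (- (r * k))) + 1 / complex_of_real r ^ 2 * cis (- (r * k)))
     has_vector_derivative (\<i> / complex_of_real r * (complex_of_real (A + k) * (- \<i> * complex_of_real r * cis (- (r * k))) + 1 * cis (- (r * k)))
        + 1 / complex_of_real r ^ 2 * (- \<i> * complex_of_real r * cis (- (r * k))))) (at k)"
    by (intro has_vector_derivative_add has_vector_derivative_mult_right has_vector_derivative_mult d0 has_vector_derivative_cis_linear)
  then show ?thesis
    by (rule has_vector_derivative_eq_rhs) (use r in \<open>simp add: field_simps power2_eq_square\<close>)
qed

lemma lborel_integral_eq_interval_integral_sum:
  fixes f :: "real \<Rightarrow> 'a::{banach, second_countable_topology}"
  assumes f: "\<And>x. isCont f x" and supp: "\<And>x. x \<notin> {a..b} \<Longrightarrow> f x = 0" and m: "a \<le> m" "m \<le> b"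
  shows "(LINT x|lborel. f x) = (LBINT x=a..m. f x) + (LBINT x=m..b. f x)"
proof -
  have "(LINT x|lborel. f x) = (LINT x:{a..b}|lborel. f x)"
    unfolding set_lebesgue_integral_def
    by (rule Bochner_Integration.integral_cong) (auto simp: supp indicator_def)
  also have "\<dots> = (LBINT x=a..b. f x)"
    using m by (subst interval_integral_Icc) auto
  also have "\<dots> = (LBINT x=a..m. f x) + (LBINT x=m..b. f x)"
  proof (rule interval_integral_sum[symmetric])
    have "min (ereal a) (min (ereal m) (ereal b)) = a" "max (ereal a) (max (ereal m) (ereal b)) = b"
      using m by (auto simp: min_def max_def)
    then show "interval_lebesgue_integrable lborel (min (ereal a) (min (ereal m) (ereal b)))
        (max (ereal a) (max (ereal m) (ereal b))) f"
      using interval_integrable_isCont[OF f] by simp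
  qed
  finally show ?thesis .
qed

lemma fourier_tent:
  assumes r: "r \<noteq> 0" and A: "0 \<le> A"
  shows "fourier (\<lambda>\<kappa>. complex_of_real (max 0 (A - \<bar>\<kappa>\<bar>))) r = complex_of_real (2 * (1 - cos (r * A)) / r\<^sup>2)"
proof -
  define f where "f k = complex_of_real (max 0 (A - \<bar>k\<bar>)) * cis (- (r * k))" for k
  define F1 where "F1 k = \<i> / complex_of_real r * (complex_of_real (A - k) * cis (- (r * k))) - 1 / complex_of_real r ^ 2 * cis (- (r * k))" for k
  define F2 where "F2 k = \<i> / complex_of_real r * (complex_of_real (A + k) * cis (- (r * k))) + 1 / complex_of_real r ^ 2 * cis (- (r * k))" for k
  have cf: "isCont f x" for x unfolding f_def by (intro continuous_intros isCont_cis_linear)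
  have "fourier (\<lambda>\<kappa>. complex_of_real (max 0 (A - \<bar>\<kappa>\<bar>))) r = (LBINT k=-A..0. f k) + (LBINT k=0..A. f k)"
    unfolding fourier_def f_def[symmetric] zero_ereal_def
    by (rule lborel_integral_eq_interval_integral_sum[OF cf]) (use A in \<open>auto simp: f_def\<close>)
  also have "(LBINT k=0..A. f k) = F1 A - F1 0"
    unfolding zero_ereal_def
  proof (rule interval_integral_FTC_finite)
    show "continuous_on {min 0 A..max 0 A} f" using cf by (simp add: continuous_at_imp_continuous_on)
    fix x assume x: "min 0 A \<le> x" "x \<le> max 0 A"
    then have "f x = complex_of_real (A - x) * cis (- (r * x))" using A by (simp add: f_def)
    moreover have "(F1 has_vector_derivative complex_of_real (A - x) * cis (- (r * x))) (at x)"
      unfolding F1_def by (rule has_vector_derivative_tent_primitive_right[OF r])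
    ultimately show "(F1 has_vector_derivative f x) (at x within {min 0 A..max 0 A})"
      by (simp add: has_vector_derivative_at_within)
  qed
  also have "(LBINT k=-A..0. f k) = F2 0 - F2 (-A)"
    unfolding zero_ereal_def
  proof (rule interval_integral_FTC_finite)
    show "continuous_on {min (-A) 0..max (-A) 0} f" using cf by (simp add: continuous_at_imp_continuous_on)
    fix x assume x: "min (-A) 0 \<le> x" "x \<le> max (-A) 0"
    then have "f x = complex_of_real (A + x) * cis (- (r * x))" using A by (simp add: f_def)
    moreover have "(F2 has_vector_derivative complex_of_real (A + x) * cis (- (r * x))) (at x)"
      unfolding F2_def by (rule has_vector_derivative_tent_primitive_left[OF r])
    ultimately show "(F2 has_vector_derivative f x) (at x within {min (-A) 0..max (-A) 0})"
      by (simp add: has_vector_derivative_at_within)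
  qed
  also have "F2 0 - F2 (-A) + (F1 A - F1 0) = complex_of_real (2 * (1 - cos (r * A)) / r\<^sup>2)"
    unfolding F1_def F2_def using r
    by (simp add: complex_eq_iff field_simps power2_eq_square cos_minus sin_minus)
  finally show ?thesis .
qed

section \<open>Principal values of Lipschitz integrable functions\<close>

definition lipschitz_integrable :: "(real \<Rightarrow> complex) \<Rightarrow> bool" where
  "lipschitz_integrable g \<longleftrightarrow> integrable lborel g \<and> (\<exists>L. L-lipschitz_on UNIV g)"

text \<open>The principal value at \<open>c\<close> splits into the part \<open>|w - c| > 1\<close> and a near part in which
  subtracting \<open>g c\<close> makes the integrand bounded; the subtracted term contributes nothing because the
  kernel \<open>1/t\<close> is odd.\<close>

definition pv_far :: "(real \<Rightarrow> complex) \<Rightarrow> real \<Rightarrow> complex" where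
  "pv_far g c = (LINT t|lborel. indicator {t. 1 < \<bar>t\<bar>} t *\<^sub>R (g (c + t) / complex_of_real t))"

definition pv_near_trunc :: "(real \<Rightarrow> complex) \<Rightarrow> real \<Rightarrow> real \<Rightarrow> complex" where
  "pv_near_trunc g c \<epsilon> =
     (LINT t|lborel. indicator {t. \<epsilon> < \<bar>t\<bar> \<and> \<bar>t\<bar> \<le> 1} t *\<^sub>R ((g (c + t) - g c) / complex_of_real t))"

definition pv_near :: "(real \<Rightarrow> complex) \<Rightarrow> real \<Rightarrow> complex" where
  "pv_near g c = pv_near_trunc g c 0"

lemma lipschitz_on_UNIV_normD:
  fixes g :: "real \<Rightarrow> 'a::real_normed_vector"
  shows "L-lipschitz_on UNIV g \<Longrightarrow> norm (g x - g y) \<le> L * \<bar>x - y\<bar>"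
  using lipschitz_on_normD[of L UNIV g x y] by simp

lemma lipschitz_on_UNIV_measurable:
  fixes g :: "real \<Rightarrow> 'a::real_normed_vector"
  shows "L-lipschitz_on UNIV g \<Longrightarrow> g \<in> borel_measurable borel"
  by (intro borel_measurable_continuous_onI lipschitz_on_continuous_on)

lemma norm_difference_quotient_le:
  "L-lipschitz_on UNIV g \<Longrightarrow> norm ((g (c + t) - g c) / complex_of_real t) \<le> L"
  using lipschitz_on_UNIV_normD[of L g "c + t" c] lipschitz_on_nonneg[of L UNIV g]
  by (cases "t = 0") (auto simp: norm_divide field_simps)

lemma integrable_const_indicator_Icc: "integrable lborel (\<lambda>t::real. (K::real) * indicator {a..b} t)"
  using borel_integrable_atLeastAtMost[of a b "\<lambda>_. K"] by simp

lemma pv_truncation_shift: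
  "(LINT w:{w. \<epsilon> < \<bar>w - c\<bar>}|lborel. g w / complex_of_real (w - c)) =
   (LINT t|lborel. indicator {t. \<epsilon> < \<bar>t\<bar>} t *\<^sub>R (g (c + t) / complex_of_real t))"
  unfolding set_lebesgue_integral_def
  by (subst lborel_integral_real_affine[where c=1 and t=c]) (simp_all add: indicator_def)

lemma integrable_far_integrand:
  assumes "integrable lborel G" "0 < a"
  shows "integrable lborel (\<lambda>t. indicator {t. a < \<bar>t\<bar>} t *\<^sub>R (G t / complex_of_real t))"
proof (rule Bochner_Integration.integrable_bound)
  have [measurable]: "G \<in> borel_measurable borel" using borel_measurable_integrable[OF assms(1)] by simp
  show "(\<lambda>t. indicator {t. a < \<bar>t\<bar>} t *\<^sub>R (G t / complex_of_real t)) \<in> borel_measurable lborel"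
    by measurable
  show "integrable lborel (\<lambda>t. norm (G t) / a)" using assms(1) by simp
  have "norm (indicator {t. a < \<bar>t\<bar>} t *\<^sub>R (G t / complex_of_real t)) \<le> norm (G t) / a" for t
    using assms(2) by (auto simp: indicator_def norm_divide intro!: divide_left_mono)
  then show "AE t in lborel. norm (indicator {t. a < \<bar>t\<bar>} t *\<^sub>R (G t / complex_of_real t)) \<le> norm (norm (G t) / a)"
    by (intro AE_I2) (metis abs_ge_self order_trans real_norm_def)
qed

lemma integrable_annulus_integrand:
  fixes k :: "real \<Rightarrow> complex"
  assumes [measurable]: "k \<in> borel_measurable borel"
    and B: "\<And>t. a < \<bar>t\<bar> \<Longrightarrow> \<bar>t\<bar> \<le> b \<Longrightarrow> norm (k t) \<le> B"
  shows "integrable lborel (\<lambda>t. indicator {t. a < \<bar>t\<bar> \<and> \<bar>t\<bar> \<le> b} t *\<^sub>R k t)"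
proof (rule Bochner_Integration.integrable_bound[where f="\<lambda>t. B * indicator {-\<bar>b\<bar>..\<bar>b\<bar>} t"])
  show "integrable lborel (\<lambda>t. B * indicator {-\<bar>b\<bar>..\<bar>b\<bar>} t)" by (rule integrable_const_indicator_Icc)
  show "(\<lambda>t. indicator {t. a < \<bar>t\<bar> \<and> \<bar>t\<bar> \<le> b} t *\<^sub>R k t) \<in> borel_measurable lborel"
    by measurable
  have "norm (indicator {t. a < \<bar>t\<bar> \<and> \<bar>t\<bar> \<le> b} t *\<^sub>R k t) \<le> \<bar>B * indicator {-\<bar>b\<bar>..\<bar>b\<bar>} t\<bar>" for t
    using B[of t] norm_ge_zero[of "k t"] by (auto simp: indicator_def)
  then show "AE t in lborel. norm (indicator {t. a < \<bar>t\<bar> \<and> \<bar>t\<bar> \<le> b} t *\<^sub>R k t)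
      \<le> norm (B * indicator {-\<bar>b\<bar>..\<bar>b\<bar>} t)"
    by simp
qed

lemma norm_integral_annulus_le:
  fixes k :: "real \<Rightarrow> complex"
  assumes "k \<in> borel_measurable borel" "\<And>t. norm (k t) \<le> B" "0 \<le> b"
  shows "norm (LINT t|lborel. indicator {t. a < \<bar>t\<bar> \<and> \<bar>t\<bar> \<le> b} t *\<^sub>R k t) \<le> 2 * B * b"
proof -
  have "norm (LINT t|lborel. indicator {t. a < \<bar>t\<bar> \<and> \<bar>t\<bar> \<le> b} t *\<^sub>R k t)
      \<le> (LINT t|lborel. B * indicator {-b..b} t)"
  proof (rule Bochner_Integration.integral_norm_bound_integral)
    show "integrable lborel (\<lambda>t. indicator {t. a < \<bar>t\<bar> \<and> \<bar>t\<bar> \<le> b} t *\<^sub>R k t)"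
      using integrable_annulus_integrand assms(1,2) by blast
    show "integrable lborel (\<lambda>t. B * indicator {-b..b} t)" by (rule integrable_const_indicator_Icc)
    show "norm (indicator {t. a < \<bar>t\<bar> \<and> \<bar>t\<bar> \<le> b} t *\<^sub>R k t) \<le> B * indicator {-b..b} t" for t
      using assms(2)[of t] order_trans[OF norm_ge_zero assms(2)] by (auto simp: indicator_def)
  qed
  also have "\<dots> = 2 * B * b" using assms(3) by (simp add: measure_lborel_Icc)
  finally show ?thesis .
qed

lemma integral_odd_annulus_eq_0:
  "(LINT t|lborel. indicator {t. a < \<bar>t\<bar> \<and> \<bar>t\<bar> \<le> b} t *\<^sub>R (z / complex_of_real t)) = 0"
  (is "?I = 0")
proof -
  let ?f = "\<lambda>t. indicator {t. a < \<bar>t\<bar> \<and> \<bar>t\<bar> \<le> b} t *\<^sub>R (z / complex_of_real t)"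
  have "?I = \<bar>-1\<bar> *\<^sub>R (LINT t|lborel. ?f (0 + (-1) * t))"
    by (rule lborel_integral_real_affine) simp
  also have "(\<lambda>t. ?f (0 + (-1) * t)) = (\<lambda>t. - ?f t)"
    by (rule ext) (simp add: indicator_def)
  finally have "?I = - ?I" by simp
  then show ?thesis by simp
qed

lemma pv_truncation_eq:
  assumes "lipschitz_integrable g" "0 < \<epsilon>" "\<epsilon> < 1"
  shows "(LINT w:{w. \<epsilon> < \<bar>w - c\<bar>}|lborel. g w / complex_of_real (w - c)) = pv_far g c + pv_near_trunc g c \<epsilon>"
proof -
  obtain L where L: "L-lipschitz_on UNIV g" and gi: "integrable lborel g"
    using assms(1) unfolding lipschitz_integrable_def by blast
  have [measurable]: "g \<in> borel_measurable borel" by (rule lipschitz_on_UNIV_measurable[OF L])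
  let ?A = "{t. \<epsilon> < \<bar>t\<bar> \<and> \<bar>t\<bar> \<le> 1}"
  let ?k = "\<lambda>t. (g (c + t) - g c) / complex_of_real t"
  have "(\<lambda>t. indicator {t. \<epsilon> < \<bar>t\<bar>} t *\<^sub>R (g (c + t) / complex_of_real t)) =
      (\<lambda>t. indicator {t. 1 < \<bar>t\<bar>} t *\<^sub>R (g (c + t) / complex_of_real t)
         + (indicator ?A t *\<^sub>R (g c / complex_of_real t) + indicator ?A t *\<^sub>R ?k t))"
    using assms(2,3) by (auto simp: indicator_def diff_divide_distrib)
  moreover have "integrable lborel (\<lambda>t. indicator ?A t *\<^sub>R (g c / complex_of_real t))"
    by (rule integrable_annulus_integrand[where B="norm (g c) / \<epsilon>"])
       (use assms(2) in \<open>auto simp: norm_divide intro!: divide_left_mono\<close>)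
  moreover have "integrable lborel (\<lambda>t. indicator {t. 1 < \<bar>t\<bar>} t *\<^sub>R (g (c + t) / complex_of_real t))"
    using lborel_integrable_real_affine[OF gi, of 1 c] by (intro integrable_far_integrand) simp_all
  moreover have "integrable lborel (\<lambda>t. indicator ?A t *\<^sub>R ?k t)"
    by (rule integrable_annulus_integrand[OF _ norm_difference_quotient_le[OF L]]) simp
  ultimately show ?thesis
    unfolding pv_truncation_shift pv_far_def pv_near_trunc_def by (simp add: integral_odd_annulus_eq_0)
qed

lemma norm_pv_near_minus_trunc_le:
  assumes L: "L-lipschitz_on UNIV g" and "0 \<le> \<epsilon>" "\<epsilon> \<le> 1"
  shows "norm (pv_near g c - pv_near_trunc g c \<epsilon>) \<le> 2 * L * \<epsilon>"
proof -
  have [measurable]: "g \<in> borel_measurable borel" by (rule lipschitz_on_UNIV_measurable[OF L])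
  let ?k = "\<lambda>t. (g (c + t) - g c) / complex_of_real t"
  have ik: "integrable lborel (\<lambda>t. indicator {t. a < \<bar>t\<bar> \<and> \<bar>t\<bar> \<le> b} t *\<^sub>R ?k t)" for a b
    by (rule integrable_annulus_integrand[OF _ norm_difference_quotient_le[OF L]]) simp
  have "(\<lambda>t. indicator {t. 0 < \<bar>t\<bar> \<and> \<bar>t\<bar> \<le> 1} t *\<^sub>R ?k t) =
      (\<lambda>t. indicator {t. 0 < \<bar>t\<bar> \<and> \<bar>t\<bar> \<le> \<epsilon>} t *\<^sub>R ?k t + indicator {t. \<epsilon> < \<bar>t\<bar> \<and> \<bar>t\<bar> \<le> 1} t *\<^sub>R ?k t)"
    using assms(2,3) by (auto simp: indicator_def)
  then have "pv_near g c - pv_near_trunc g c \<epsilon> =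
      (LINT t|lborel. indicator {t. 0 < \<bar>t\<bar> \<and> \<bar>t\<bar> \<le> \<epsilon>} t *\<^sub>R ?k t)"
    by (simp add: pv_near_def pv_near_trunc_def Bochner_Integration.integral_add[OF ik ik]
        del: zero_less_abs_iff)
  also have "norm \<dots> \<le> 2 * L * \<epsilon>"
    using assms(2) by (intro norm_integral_annulus_le norm_difference_quotient_le[OF L]) auto
  finally show ?thesis .
qed

lemma tendsto_pv_truncation:
  assumes "lipschitz_integrable g"
  shows "((\<lambda>\<epsilon>. LINT w:{w. \<epsilon> < \<bar>w - c\<bar>}|lborel. g w / complex_of_real (w - c))
           \<longlongrightarrow> pv_far g c + pv_near g c) (at_right 0)"
proof -
  obtain L where L: "L-lipschitz_on UNIV g" using assms unfolding lipschitz_integrable_def by blast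
  have small: "\<forall>\<^sub>F \<epsilon> in at_right 0. 0 < \<epsilon> \<and> \<epsilon> < (1::real)"
    by (auto simp: eventually_at_right_field intro!: exI[of _ 1])
  have "((\<lambda>\<epsilon>. pv_near g c - pv_near_trunc g c \<epsilon>) \<longlongrightarrow> 0) (at_right 0)"
  proof (rule Lim_null_comparison)
    show "\<forall>\<^sub>F \<epsilon> in at_right 0. norm (pv_near g c - pv_near_trunc g c \<epsilon>) \<le> 2 * L * \<epsilon>"
      using small by eventually_elim (auto intro: norm_pv_near_minus_trunc_le[OF L])
    show "((\<lambda>\<epsilon>. 2 * L * \<epsilon>) \<longlongrightarrow> 0) (at_right 0)"
      by (intro tendsto_mult_right_zero tendsto_ident_at)
  qed
  from tendsto_add[OF tendsto_const[of "pv_far g c"] tendsto_diff[OF tendsto_const[of "pv_near g c"] this]]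
  have "((\<lambda>\<epsilon>. pv_far g c + pv_near_trunc g c \<epsilon>) \<longlongrightarrow> pv_far g c + pv_near g c) (at_right 0)"
    by simp
  then show ?thesis
  proof (rule Lim_transform_eventually)
    show "\<forall>\<^sub>F \<epsilon> in at_right 0. pv_far g c + pv_near_trunc g c \<epsilon> =
        (LINT w:{w. \<epsilon> < \<bar>w - c\<bar>}|lborel. g w / complex_of_real (w - c))"
      using small by eventually_elim (auto simp only: pv_truncation_eq[OF assms])
  qed
qed

lemma PV_eqI:
  "((\<lambda>\<epsilon>. LINT w:{w. \<epsilon> < \<bar>w - c\<bar>}|lborel. g w / complex_of_real (w - c)) \<longlongrightarrow> l) (at_right 0)
   \<Longrightarrow> PV c g = l"
  unfolding PV_def by (rule tendsto_Lim) simp_all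

lemma PV_eq_pv_far_pv_near: "lipschitz_integrable g \<Longrightarrow> PV c g = pv_far g c + pv_near g c"
  by (intro PV_eqI tendsto_pv_truncation)

lemma lipschitz_on_mult_left:
  fixes f :: "'a::metric_space \<Rightarrow> 'b::real_normed_field"
  shows "L-lipschitz_on U f \<Longrightarrow> (norm a * L)-lipschitz_on U (\<lambda>x. a * f x)"
  unfolding lipschitz_on_def dist_norm
  by (auto simp: norm_mult mult.assoc simp flip: right_diff_distrib intro: mult_left_mono)

lemma lipschitz_integrable_lincomb:
  assumes "lipschitz_integrable f" "lipschitz_integrable k"
  shows "lipschitz_integrable (\<lambda>x. a * f x + b * k x)"
proof -
  obtain Lf Lk where "Lf-lipschitz_on UNIV f" "Lk-lipschitz_on UNIV k"
    using assms unfolding lipschitz_integrable_def by blast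
  then have "(norm a * Lf + norm b * Lk)-lipschitz_on UNIV (\<lambda>x. a * f x + b * k x)"
    by (intro lipschitz_on_add lipschitz_on_mult_left)
  then show ?thesis using assms unfolding lipschitz_integrable_def by auto
qed

lemma schwartz_lipschitz_integrable: "schwartz f \<Longrightarrow> lipschitz_integrable f"
  unfolding lipschitz_integrable_def by (blast intro: schwartz_integrable elim: schwartz_lipschitz)

lemma PV_lincomb:
  assumes f: "lipschitz_integrable f" and k: "lipschitz_integrable k"
  shows "PV c (\<lambda>w. a * f w + b * k w) = a * PV c f + b * PV c k"
proof (rule PV_eqI)
  let ?T = "\<lambda>g \<epsilon>. LINT w:{w. \<epsilon> < \<bar>w - c\<bar>}|lborel. g w / complex_of_real (w - c)"
  have "((\<lambda>\<epsilon>. a * ?T f \<epsilon> + b * ?T k \<epsilon>) \<longlongrightarrow> a * PV c f + b * PV c k) (at_right 0)"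
    using tendsto_pv_truncation[OF f] tendsto_pv_truncation[OF k]
    by (auto simp: PV_eq_pv_far_pv_near f k intro!: tendsto_intros)
  then show "(?T (\<lambda>w. a * f w + b * k w) \<longlongrightarrow> a * PV c f + b * PV c k) (at_right 0)"
  proof (rule Lim_transform_eventually)
    have eq: "?T (\<lambda>w. a * f w + b * k w) \<epsilon> = a * ?T f \<epsilon> + b * ?T k \<epsilon>" if "0 < \<epsilon>" for \<epsilon>
    proof -
      have int: "integrable lborel (\<lambda>t. indicator {t. \<epsilon> < \<bar>t\<bar>} t *\<^sub>R (g (c + t) / complex_of_real t))"
        if "lipschitz_integrable g" for g
        using that \<open>0 < \<epsilon>\<close> lborel_integrable_real_affine[of g 1 c]
        by (intro integrable_far_integrand) (auto simp: lipschitz_integrable_def)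
      have "(\<lambda>t. indicator {t. \<epsilon> < \<bar>t\<bar>} t *\<^sub>R ((a * f (c + t) + b * k (c + t)) / complex_of_real t)) =
          (\<lambda>t. a * (indicator {t. \<epsilon> < \<bar>t\<bar>} t *\<^sub>R (f (c + t) / complex_of_real t))
             + b * (indicator {t. \<epsilon> < \<bar>t\<bar>} t *\<^sub>R (k (c + t) / complex_of_real t)))"
        by (auto simp: indicator_def add_divide_distrib)
      then show ?thesis
        unfolding pv_truncation_shift
        by (simp only: Bochner_Integration.integral_add integrable_mult_right int f k
            integral_mult_right_zero)
    qed
    show "\<forall>\<^sub>F \<epsilon> in at_right 0. a * ?T f \<epsilon> + b * ?T k \<epsilon> = ?T (\<lambda>w. a * f w + b * k w) \<epsilon>"
      using eventually_at_right_less[of "0::real"] by (rule eventually_mono) (simp only: eq)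
  qed
qed

lemma PV_uminus: "lipschitz_integrable f \<Longrightarrow> PV c (\<lambda>w. - f w) = - PV c f"
  using PV_lincomb[of f f c "-1" 0] by simp

section \<open>The principal value as a function of the singular point\<close>

lemma lborel_integral_shift:
  fixes f :: "real \<Rightarrow> 'a::{banach, second_countable_topology}"
  shows "(LINT t|lborel. f (c + t)) = (LINT t|lborel. f t)"
  using lborel_integral_real_affine[of 1 f c] by simp

lemma lborel_integral_inverse_1_plus_square: "(LINT x|lborel. inverse (1 + x\<^sup>2)) = pi"
proof -
  have "einterval (-\<infinity>) \<infinity> = UNIV" by (auto simp: einterval_iff)
  then show ?thesis
    using LBINT_inverse_1_plus_square
    by (simp add: interval_lebesgue_integral_def set_lebesgue_integral_def)
qed

lemma norm_pv_far_le:
  assumes "integrable lborel g"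
  shows "norm (pv_far g c) \<le> (LINT t|lborel. norm (g t))"
proof -
  have gc: "integrable lborel (\<lambda>t. g (c + t))"
    using lborel_integrable_real_affine[OF assms, of 1 c] by simp
  have "norm (pv_far g c) \<le> (LINT t|lborel. norm (g (c + t)))"
    unfolding pv_far_def
  proof (rule Bochner_Integration.integral_norm_bound_integral)
    show "integrable lborel (\<lambda>t. indicator {t. 1 < \<bar>t\<bar>} t *\<^sub>R (g (c + t) / complex_of_real t))"
      by (rule integrable_far_integrand[OF gc]) simp
    show "norm (indicator {t. 1 < \<bar>t\<bar>} t *\<^sub>R (g (c + t) / complex_of_real t)) \<le> norm (g (c + t))" for t
      using divide_left_mono[of 1 "\<bar>t\<bar>" "norm (g (c + t))"] by (auto simp: indicator_def norm_divide)
  qed (use gc in simp)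
  also have "\<dots> = (LINT t|lborel. norm (g t))"
    by (rule lborel_integral_shift)
  finally show ?thesis .
qed

lemma norm_pv_near_le:
  assumes "L-lipschitz_on UNIV g"
  shows "norm (pv_near g c) \<le> 2 * L"
proof -
  have [measurable]: "g \<in> borel_measurable borel" by (rule lipschitz_on_UNIV_measurable[OF assms])
  show ?thesis
    unfolding pv_near_def pv_near_trunc_def
    using norm_integral_annulus_le[OF _ norm_difference_quotient_le[OF assms], where b=1 and a=0] by simp
qed

lemma lipschitz_on_difference:
  assumes g': "\<And>x. (g has_vector_derivative g' x) (at x)" and L': "L'-lipschitz_on UNIV g'"
  shows "(L' * \<bar>t\<bar>)-lipschitz_on UNIV (\<lambda>x. g (x + t) - g x)"
proof (rule lipschitz_on_if_vector_derivative_bounded)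
  show "((\<lambda>x. g (x + t) - g x) has_vector_derivative g' (x + t) - g' x) (at x)" for x
  proof -
    have "((\<lambda>x. x + t) has_real_derivative 1) (at x)" by (auto intro!: derivative_eq_intros)
    then have "((\<lambda>x. x + t) has_vector_derivative 1) (at x)"
      by (simp add: has_real_derivative_iff_has_vector_derivative)
    from vector_diff_chain_at[OF this g']
    have "((\<lambda>x. g (x + t)) has_vector_derivative g' (x + t)) (at x)" by (simp add: o_def)
    then show ?thesis by (rule has_vector_derivative_diff[OF _ g'])
  qed
  show "norm (g' (x + t) - g' x) \<le> L' * \<bar>t\<bar>" for x
    using lipschitz_on_UNIV_normD[OF L', of "x + t" x] by simp
qed (use lipschitz_on_nonneg[OF L'] in auto)

lemma pv_near_lipschitz:
  assumes g': "\<And>x. (g has_vector_derivative g' x) (at x)"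
    and L: "L-lipschitz_on UNIV g" and L': "L'-lipschitz_on UNIV g'"
  shows "(2 * L')-lipschitz_on UNIV (pv_near g)"
proof (rule lipschitz_onI)
  show "0 \<le> 2 * L'" using lipschitz_on_nonneg[OF L'] by simp
  fix c d :: real
  have [measurable]: "g \<in> borel_measurable borel" by (rule lipschitz_on_UNIV_measurable[OF L])
  define k where "k t = ((g (c + t) - g c) - (g (d + t) - g d)) / complex_of_real t" for t
  have kb: "norm (k t) \<le> L' * \<bar>c - d\<bar>" for t
    using lipschitz_on_UNIV_normD[OF lipschitz_on_difference[OF g' L', of t], of c d]
      lipschitz_on_nonneg[OF L']
    by (cases "t = 0") (auto simp: k_def norm_divide field_simps add.commute)
  have int: "integrable lborel
      (\<lambda>t. indicator {t. 0 < \<bar>t\<bar> \<and> \<bar>t\<bar> \<le> 1} t *\<^sub>R ((g (e + t) - g e) / complex_of_real t))" for e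
    by (rule integrable_annulus_integrand[OF _ norm_difference_quotient_le[OF L]]) simp
  have "pv_near g c - pv_near g d = (LINT t|lborel.
      indicator {t. 0 < \<bar>t\<bar> \<and> \<bar>t\<bar> \<le> 1} t *\<^sub>R ((g (c + t) - g c) / complex_of_real t)
    - indicator {t. 0 < \<bar>t\<bar> \<and> \<bar>t\<bar> \<le> 1} t *\<^sub>R ((g (d + t) - g d) / complex_of_real t))"
    unfolding pv_near_def pv_near_trunc_def by (rule Bochner_Integration.integral_diff[OF int int, symmetric])
  also have "\<dots> = (LINT t|lborel. indicator {t. 0 < \<bar>t\<bar> \<and> \<bar>t\<bar> \<le> 1} t *\<^sub>R k t)"
    by (rule Bochner_Integration.integral_cong) (simp_all add: k_def diff_divide_distrib scaleR_diff_right)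
  also have "norm \<dots> \<le> 2 * (L' * \<bar>c - d\<bar>) * 1"
    by (rule norm_integral_annulus_le[OF _ kb]) (simp_all add: k_def)
  finally show "dist (pv_near g c) (pv_near g d) \<le> 2 * L' * dist c d"
    by (simp add: dist_norm dist_real_def mult.assoc)
qed

lemma norm_diff_le_of_derivative_decay:
  assumes g': "\<And>x. (g has_vector_derivative g' x) (at x)"
    and C: "\<And>y. norm (g' y) \<le> C * inverse (1 + y\<^sup>2)" "0 \<le> C"
    and xy: "\<bar>y - x\<bar> \<le> 1"
  shows "norm (g y - g x) \<le> 3 * C * inverse (1 + x\<^sup>2) * \<bar>y - x\<bar>"
proof -
  have "(3 * C * inverse (1 + x\<^sup>2))-lipschitz_on {x - 1..x + 1} g"
  proof (rule lipschitz_on_if_vector_derivative_bounded[OF _ g'])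
    show "norm (g' s) \<le> 3 * C * inverse (1 + x\<^sup>2)" if "s \<in> {x - 1..x + 1}" for s
    proof -
      have "\<bar>x - s\<bar> \<le> 1" using that by auto
      then have "(x - s)\<^sup>2 \<le> 1" by (metis abs_le_square_iff abs_one one_power2)
      moreover have "x\<^sup>2 = 2 * s\<^sup>2 + 2 * (x - s)\<^sup>2 - (2 * s - x)\<^sup>2"
        by (simp add: power2_eq_square algebra_simps)
      moreover have "0 \<le> (2 * s - x)\<^sup>2" "0 \<le> s\<^sup>2" by simp_all
      ultimately have "1 + x\<^sup>2 \<le> 3 * (1 + s\<^sup>2)" by (smt (verit))
      then have "inverse (1 + s\<^sup>2) \<le> 3 * inverse (1 + x\<^sup>2)"
        by (simp add: field_simps add_pos_nonneg)
      then show ?thesis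
        using C(1)[of s] mult_left_mono[OF _ C(2)] by (fastforce simp: mult.assoc)
    qed
  qed (use C(2) in auto)
  from lipschitz_on_normD[OF this, of y x] xy show ?thesis by (simp add: abs_le_iff)
qed

lemma pv_far_local_lipschitz:
  assumes g': "\<And>x. (g has_vector_derivative g' x) (at x)"
    and C: "\<And>y. norm (g' y) \<le> C * inverse (1 + y\<^sup>2)" "0 \<le> C"
    and g: "integrable lborel g" and cd: "\<bar>c - d\<bar> \<le> 1"
  shows "norm (pv_far g c - pv_far g d) \<le> 3 * C * pi * \<bar>c - d\<bar>"
proof -
  let ?F = "\<lambda>e t. indicator {t. 1 < \<bar>t\<bar>} t *\<^sub>R (g (e + t) / complex_of_real t)"
  let ?K = "\<lambda>t. 3 * C * \<bar>c - d\<bar> * inverse (1 + (d + t)\<^sup>2)"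
  have int: "integrable lborel (?F e)" for e
    by (rule integrable_far_integrand) (use lborel_integrable_real_affine[OF g, of 1 e] in simp_all)
  have "norm (pv_far g c - pv_far g d) = norm (LINT t|lborel. ?F c t - ?F d t)"
    unfolding pv_far_def by (simp add: Bochner_Integration.integral_diff[OF int int])
  also have "\<dots> \<le> (LINT t|lborel. ?K t)"
  proof (rule Bochner_Integration.integral_norm_bound_integral)
    show "integrable lborel (\<lambda>t. ?F c t - ?F d t)" using int by simp
    show "integrable lborel ?K"
      using lborel_integrable_real_affine[OF integrable_inverse_1_plus_square_lborel, of 1 d] by simp
    show "norm (?F c t - ?F d t) \<le> ?K t" for t
    proof (cases "1 < \<bar>t\<bar>")
      case True
      have "norm (?F c t - ?F d t) = norm (g (c + t) - g (d + t)) / \<bar>t\<bar>"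
        using True by (simp add: norm_divide diff_divide_distrib[symmetric])
      also have "\<dots> \<le> norm (g (c + t) - g (d + t))"
        using True by (simp add: divide_le_eq mult_le_cancel_left1 order_trans[OF norm_ge_zero])
      also have "\<dots> \<le> ?K t"
        using norm_diff_le_of_derivative_decay[OF g' C, of "c + t" "d + t"] cd by (simp add: mult_ac)
      finally show ?thesis .
    qed (use C(2) in simp)
  qed
  also have "\<dots> = 3 * C * \<bar>c - d\<bar> * pi"
    using lborel_integral_shift[of "\<lambda>t. inverse (1 + t\<^sup>2)" d]
    by (simp add: lborel_integral_inverse_1_plus_square)
  finally show ?thesis by (simp add: mult_ac)
qed

lemma lipschitz_on_UNIV_if_bounded_and_locally_lipschitz:
  fixes f :: "real \<Rightarrow> 'a::real_normed_vector"
  assumes M: "\<And>x. norm (f x) \<le> M"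
    and L: "\<And>x y. \<bar>x - y\<bar> \<le> 1 \<Longrightarrow> norm (f x - f y) \<le> L * \<bar>x - y\<bar>" "0 \<le> L"
  shows "(L + 2 * M)-lipschitz_on UNIV f"
proof (rule lipschitz_onI)
  have M0: "0 \<le> M" using M[of 0] by (meson norm_ge_zero order_trans)
  then show "0 \<le> L + 2 * M" using L(2) by simp
  fix x y :: real
  show "dist (f x) (f y) \<le> (L + 2 * M) * dist x y"
  proof (cases "\<bar>x - y\<bar> \<le> 1")
    case True
    then have "norm (f x - f y) \<le> L * \<bar>x - y\<bar>" by (rule L(1))
    also have "\<dots> \<le> (L + 2 * M) * \<bar>x - y\<bar>" using M0 by (simp add: mult_right_mono)
    finally show ?thesis by (simp add: dist_norm dist_real_def)
  next
    case False
    have "norm (f x - f y) \<le> 2 * M" using norm_triangle_ineq4[of "f x" "f y"] M[of x] M[of y] by simp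
    also have "\<dots> \<le> (L + 2 * M) * \<bar>x - y\<bar>"
      using False M0 L(2) mult_mono[of 1 "\<bar>x - y\<bar>" "2 * M" "L + 2 * M"] by (simp add: mult.commute)
    finally show ?thesis by (simp add: dist_norm dist_real_def)
  qed
qed

lemma PV_schwartz_bounded_lipschitz:
  assumes b: "schwartz b"
  obtains M L where "\<And>c. norm (PV c b) \<le> M" "L-lipschitz_on UNIV (\<lambda>c. PV c b)"
proof -
  obtain Lb where Lb: "Lb-lipschitz_on UNIV b" using schwartz_lipschitz[OF b] .
  obtain L1 where L1: "L1-lipschitz_on UNIV (vderiv b)" using schwartz_lipschitz[OF schwartz_vderiv[OF b]] .
  obtain C where C: "0 \<le> C" "\<And>y. norm (vderiv b y) \<le> C * inverse (1 + y\<^sup>2)"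
    using rapid_decay_bound[OF schwartz_rapid_decay[OF schwartz_vderiv[OF b]]] by blast
  note b' = schwartz_has_vector_derivative[OF b]
  have PV: "PV c b = pv_far b c + pv_near b c" for c
    by (rule PV_eq_pv_far_pv_near[OF schwartz_lipschitz_integrable[OF b]])
  define M where "M = (LINT t|lborel. norm (b t)) + 2 * Lb"
  have bounded: "norm (PV c b) \<le> M" for c
    using norm_triangle_ineq[of "pv_far b c" "pv_near b c"]
      norm_pv_far_le[OF schwartz_integrable[OF b], of c] norm_pv_near_le[OF Lb, of c]
    by (simp add: PV M_def)
  have "norm (PV c b - PV d b) \<le> (3 * C * pi + 2 * L1) * \<bar>c - d\<bar>" if "\<bar>c - d\<bar> \<le> 1" for c d
  proof -
    have "norm (PV c b - PV d b) \<le> norm (pv_far b c - pv_far b d) + norm (pv_near b c - pv_near b d)"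
      using norm_triangle_ineq[of "pv_far b c - pv_far b d" "pv_near b c - pv_near b d"]
      by (simp add: PV algebra_simps)
    also have "\<dots> \<le> 3 * C * pi * \<bar>c - d\<bar> + 2 * L1 * \<bar>c - d\<bar>"
      using pv_far_local_lipschitz[OF b' C(2,1) schwartz_integrable[OF b] that]
        lipschitz_on_UNIV_normD[OF pv_near_lipschitz[OF b' Lb L1], of c d]
      by (rule add_mono)
    finally show ?thesis by (simp add: algebra_simps)
  qed
  then have "(3 * C * pi + 2 * L1 + 2 * M)-lipschitz_on UNIV (\<lambda>c. PV c b)"
    using C(1) lipschitz_on_nonneg[OF L1]
    by (intro lipschitz_on_UNIV_if_bounded_and_locally_lipschitz bounded) auto
  with bounded show ?thesis by (rule that)
qed

lemma lipschitz_integrable_mult_bounded_lipschitz: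
  assumes a: "schwartz a" and H: "\<And>x. norm (H x) \<le> M" "L-lipschitz_on UNIV H"
  shows "lipschitz_integrable (\<lambda>x. a x * H x)"
proof -
  obtain Ba where Ba: "\<And>x. norm (a x) \<le> Ba"
    using rapid_decay_bounded[OF schwartz_rapid_decay[OF a]] by (auto simp: bounded_iff)
  obtain La where La: "La-lipschitz_on UNIV a" using schwartz_lipschitz[OF a] .
  have [measurable]: "a \<in> borel_measurable borel" "H \<in> borel_measurable borel"
    using schwartz_measurable[OF a] lipschitz_on_UNIV_measurable[OF H(2)] by auto
  have "integrable lborel (\<lambda>x. a x * H x)"
  proof (rule Bochner_Integration.integrable_bound)
    show "integrable lborel (\<lambda>x. M * norm (a x))" using schwartz_integrable[OF a] by simp
    show "(\<lambda>x. a x * H x) \<in> borel_measurable lborel" by measurable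
    show "AE x in lborel. norm (a x * H x) \<le> norm (M * norm (a x))"
      using order_trans[OF norm_ge_zero H(1)[of 0]]
      by (intro AE_I2) (simp add: norm_mult mult.commute mult_right_mono[OF H(1)])
  qed
  moreover have "(Ba * L + La * M)-lipschitz_on UNIV (\<lambda>x. a x * H x)"
  proof (rule lipschitz_onI)
    have "0 \<le> Ba" "0 \<le> M" using Ba[of 0] H(1)[of 0] by (auto intro: order_trans[OF norm_ge_zero])
    then show "0 \<le> Ba * L + La * M"
      using lipschitz_on_nonneg[OF H(2)] lipschitz_on_nonneg[OF La] by simp
    fix x y :: real
    have "a x * H x - a y * H y = a x * (H x - H y) + (a x - a y) * H y" by (simp add: algebra_simps)
    then have "norm (a x * H x - a y * H y) \<le> norm (a x) * norm (H x - H y) + norm (a x - a y) * norm (H y)"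
      by (metis norm_mult norm_triangle_ineq)
    also have "\<dots> \<le> Ba * (L * \<bar>x - y\<bar>) + (La * \<bar>x - y\<bar>) * M"
      using \<open>0 \<le> Ba\<close> \<open>0 \<le> M\<close> lipschitz_on_nonneg[OF La]
      by (intro add_mono mult_mono Ba H(1) lipschitz_on_UNIV_normD[OF H(2)] lipschitz_on_UNIV_normD[OF La])
         auto
    finally show "dist (a x * H x) (a y * H y) \<le> (Ba * L + La * M) * dist x y"
      by (simp add: dist_norm dist_real_def algebra_simps)
  qed
  ultimately show ?thesis unfolding lipschitz_integrable_def by blast
qed

lemma lipschitz_integrable_mult_PV_reflection:
  assumes "schwartz a" "schwartz b"
  shows "lipschitz_integrable (\<lambda>x. a x * (PV (- x) b - PV x b))"
proof -
  obtain M L where M: "\<And>c. norm (PV c b) \<le> M" and L: "L-lipschitz_on UNIV (\<lambda>c. PV c b)"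
    using PV_schwartz_bounded_lipschitz[OF assms(2)] by blast
  have "norm (PV (- x) b - PV x b) \<le> 2 * M" for x
    using norm_triangle_ineq4[of "PV (- x) b" "PV x b"] M[of "- x"] M[of x] by simp
  moreover have "(2 * L)-lipschitz_on UNIV (\<lambda>x. PV (- x) b - PV x b)"
  proof (rule lipschitz_onI)
    fix x y :: real
    have "norm ((PV (- x) b - PV x b) - (PV (- y) b - PV y b))
        \<le> norm (PV (- x) b - PV (- y) b) + norm (PV x b - PV y b)"
      using norm_triangle_ineq4[of "PV (- x) b - PV (- y) b" "PV x b - PV y b"]
      by (simp add: algebra_simps)
    also have "\<dots> \<le> L * \<bar>x - y\<bar> + L * \<bar>x - y\<bar>"
      using lipschitz_on_UNIV_normD[OF L, of "- x" "- y"] lipschitz_on_UNIV_normD[OF L, of x y]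
      by (simp add: abs_minus_commute)
    finally show "dist (PV (- x) b - PV x b) (PV (- y) b - PV y b) \<le> 2 * L * dist x y"
      by (simp add: dist_norm dist_real_def)
  qed (use lipschitz_on_nonneg[OF L] in simp)
  ultimately show ?thesis by (rule lipschitz_integrable_mult_bounded_lipschitz[OF assms(1)])
qed

section \<open>Even tensor products and the form \<open>T\<^sup>2\<close>\<close>

definition even_tensor :: "(real \<Rightarrow> complex) \<Rightarrow> (real \<Rightarrow> complex) \<Rightarrow> real \<Rightarrow> real \<Rightarrow> complex" where
  "even_tensor A B x y = A x * B y + A (- x) * B (- y)"

lemma even_tensor_swap: "even_tensor A B x y = even_tensor B A y x"
  by (simp add: even_tensor_def mult.commute)

lemma even_tensor_slice:
  "(\<lambda>y. c * even_tensor A B x y) = (\<lambda>y. (c * A x) * B y + (c * A (- x)) * B (- y))"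
  by (simp add: even_tensor_def algebra_simps)

lemma lipschitz_integrable_even_tensor_slice:
  assumes "schwartz A" "schwartz B"
  shows "lipschitz_integrable (\<lambda>y. c * even_tensor A B x y)"
  unfolding even_tensor_slice
  by (intro lipschitz_integrable_lincomb schwartz_lipschitz_integrable schwartz_reflect[OF assms(2)] assms(2))

lemma lipschitz_integrable_PV_even_tensor_slice:
  assumes A: "schwartz A" and B: "schwartz B"
  shows "lipschitz_integrable
    (\<lambda>x. PV (- x) (\<lambda>y. c * even_tensor A B x y) - PV x (\<lambda>y. c * even_tensor A B x y))"
proof -
  let ?B' = "\<lambda>y. B (- y)"
  have PV_slice: "PV d (\<lambda>y. c * even_tensor A B x y) = c * A x * PV d B + c * A (- x) * PV d ?B'" for d x
    unfolding even_tensor_slice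
    by (intro PV_lincomb schwartz_lipschitz_integrable B schwartz_reflect[OF B])
  have "lipschitz_integrable
      (\<lambda>x. 1 * (c * A x * (PV (- x) B - PV x B)) + 1 * (c * A (- x) * (PV (- x) ?B' - PV x ?B')))"
    using A B
    by (intro lipschitz_integrable_lincomb lipschitz_integrable_mult_PV_reflection schwartz_cmult
        schwartz_reflect[OF A] schwartz_reflect[OF B])
  then show ?thesis by (simp add: PV_slice algebra_simps)
qed

lemma T2_uminus:
  assumes "\<And>x. lipschitz_integrable (\<lambda>y. \<theta> (x, y))" "\<And>y. lipschitz_integrable (\<lambda>x. \<theta> (x, y))"
    and "lipschitz_integrable (\<lambda>x. PV (- x) (\<lambda>y. \<theta> (x, y)) - PV x (\<lambda>y. \<theta> (x, y)))"
    and "lipschitz_integrable (\<lambda>y. PV (- y) (\<lambda>x. \<theta> (x, y)) - PV y (\<lambda>x. \<theta> (x, y)))"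
  shows "T2 (\<lambda>w. - \<theta> w) = - T2 \<theta>"
proof -
  have "(\<lambda>x. PV (- x) (\<lambda>y. - \<theta> (x, y)) - PV x (\<lambda>y. - \<theta> (x, y)))
      = (\<lambda>x. - (PV (- x) (\<lambda>y. \<theta> (x, y)) - PV x (\<lambda>y. \<theta> (x, y))))"
    by (simp add: PV_uminus assms(1))
  moreover have "(\<lambda>y. PV (- y) (\<lambda>x. - \<theta> (x, y)) - PV y (\<lambda>x. - \<theta> (x, y)))
      = (\<lambda>y. - (PV (- y) (\<lambda>x. \<theta> (x, y)) - PV y (\<lambda>x. \<theta> (x, y))))"
    by (simp add: PV_uminus assms(2))
  ultimately show ?thesis
    unfolding T2_def by (simp only: PV_uminus assms(3,4)) (simp add: algebra_simps)
qed

lemma T2_uminus_even_tensor: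
  assumes "schwartz A" "schwartz B"
  shows "T2 (\<lambda>w. - (c * even_tensor A B (fst w) (snd w))) = - T2 (\<lambda>w. c * even_tensor A B (fst w) (snd w))"
proof (rule T2_uminus)
  show "lipschitz_integrable (\<lambda>y. c * even_tensor A B (fst (x, y)) (snd (x, y)))" for x
    using lipschitz_integrable_even_tensor_slice[OF assms] by simp
  show "lipschitz_integrable (\<lambda>x. c * even_tensor A B (fst (x, y)) (snd (x, y)))" for y
    using lipschitz_integrable_even_tensor_slice[OF assms(2,1), of c y]
    by (simp only: fst_conv snd_conv even_tensor_swap[of B A])
  show "lipschitz_integrable (\<lambda>x. PV (- x) (\<lambda>y. c * even_tensor A B (fst (x, y)) (snd (x, y)))
      - PV x (\<lambda>y. c * even_tensor A B (fst (x, y)) (snd (x, y))))"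
    using lipschitz_integrable_PV_even_tensor_slice[OF assms] by simp
  show "lipschitz_integrable (\<lambda>y. PV (- y) (\<lambda>x. c * even_tensor A B (fst (x, y)) (snd (x, y)))
      - PV y (\<lambda>x. c * even_tensor A B (fst (x, y)) (snd (x, y))))"
    using lipschitz_integrable_PV_even_tensor_slice[OF assms(2,1), of c]
    by (simp only: fst_conv snd_conv even_tensor_swap[of B A])
qed

lemma even_tensor_in_Se_sep:
  assumes "schwartz A" "schwartz B"
  shows "(\<lambda>w. c * even_tensor A B (fst w) (snd w)) \<in> Se_sep"
  unfolding Se_sep_def
proof (intro CollectI exI conjI)
  show "\<forall>i<1::nat. schwartz ((\<lambda>_. A) i) \<and> schwartz ((\<lambda>_. B) i)" using assms by simp
  show "(\<lambda>w. c * even_tensor A B (fst w) (snd w)) = (\<lambda>w. \<Sum>i<1::nat. (\<lambda>_. c) i *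
      ((\<lambda>_. A) i (fst w) * (\<lambda>_. B) i (snd w) + (\<lambda>_. A) i (- fst w) * (\<lambda>_. B) i (- snd w)))"
    by (simp add: even_tensor_def)
qed

lemma even_tensor_tendsto_0:
  assumes "rapid_decay A" "rapid_decay B"
  shows "((\<lambda>w. even_tensor A B (fst w) (snd w)) \<longlongrightarrow> 0) at_infinity"
proof -
  obtain CA CB where CA: "0 \<le> CA" "\<And>t. norm (A t) \<le> CA * inverse (1 + t\<^sup>2)"
    and CB: "0 \<le> CB" "\<And>t. norm (B t) \<le> CB * inverse (1 + t\<^sup>2)"
    using rapid_decay_bound[OF assms(1)] rapid_decay_bound[OF assms(2)] by metis
  have product: "norm (A x * B y) \<le> CA * CB * inverse (1 + (norm (x, y))\<^sup>2)" for x y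
  proof -
    have "norm (A x * B y) \<le> (CA * inverse (1 + x\<^sup>2)) * (CB * inverse (1 + y\<^sup>2))"
      unfolding norm_mult using CA CB by (intro mult_mono) auto
    also have "\<dots> = CA * CB * inverse ((1 + x\<^sup>2) * (1 + y\<^sup>2))" by (simp add: field_simps)
    also have "\<dots> \<le> CA * CB * inverse (1 + (norm (x, y))\<^sup>2)"
      using CA(1) CB(1) by (intro mult_left_mono le_imp_inverse_le) (auto simp: norm_Pair algebra_simps intro!: add_pos_nonneg)
    finally show ?thesis .
  qed
  have bound: "norm (even_tensor A B (fst w) (snd w)) \<le> 2 * CA * CB * inverse (1 + (norm w)\<^sup>2)" for w
  proof -
    have "norm (even_tensor A B (fst w) (snd w))
        \<le> norm (A (fst w) * B (snd w)) + norm (A (- fst w) * B (- snd w))"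
      unfolding even_tensor_def by (rule norm_triangle_ineq)
    also have "\<dots> \<le> CA * CB * inverse (1 + (norm (fst w, snd w))\<^sup>2)
        + CA * CB * inverse (1 + (norm (- fst w, - snd w))\<^sup>2)"
      by (intro add_mono product)
    also have "\<dots> = 2 * CA * CB * inverse (1 + (norm w)\<^sup>2)"
      by (cases w) (simp add: norm_Pair)
    finally show ?thesis .
  qed
  have "((\<lambda>x::real. 2 * CA * CB * inverse (1 + x\<^sup>2)) \<longlongrightarrow> 0) at_top" by real_asymp
  from filterlim_compose[OF this filterlim_norm_at_top]
  have "((\<lambda>w::real \<times> real. 2 * CA * CB * inverse (1 + (norm w)\<^sup>2)) \<longlongrightarrow> 0) at_infinity"
    by (simp add: o_def)
  then show ?thesis
    by (rule Lim_null_comparison[rotated]) (use bound in \<open>auto intro: always_eventually\<close>)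
qed

section \<open>The functions \<open>\<psi>\<close> and \<open>g\<close>\<close>

lemma
  fixes f g :: "real \<Rightarrow> complex"
  assumes f: "integrable lborel f" and g: "integrable lborel g"
  shows integrable_lborel_pair_product: "integrable lborel (\<lambda>y::real \<times> real. f (fst y) * g (snd y))"
    and lborel_integral_pair_product:
      "(LINT y|lborel. f (fst y) * g (snd y)) = (LINT x|lborel. f x) * (LINT x|lborel. g x)"
proof -
  have [measurable]: "f \<in> borel_measurable borel" "g \<in> borel_measurable borel"
    using borel_measurable_integrable[OF f] borel_measurable_integrable[OF g] by simp_all
  have lborel_pair: "(lborel :: (real \<times> real) measure) = lborel \<Otimes>\<^sub>M lborel" by (rule lborel_prod[symmetric])
  have int: "integrable (lborel \<Otimes>\<^sub>M lborel) (\<lambda>y::real \<times> real. f (fst y) * g (snd y))"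
  proof (rule lborel_pair.Fubini_integrable)
    show "(\<lambda>y. f (fst y) * g (snd y)) \<in> borel_measurable (lborel \<Otimes>\<^sub>M (lborel::real measure))" by measurable
    show "integrable lborel (\<lambda>x. LINT y|lborel. norm (f (fst (x, y)) * g (snd (x, y))))"
      using integrable_mult_left[OF integrable_norm[OF f], of "LINT y|lborel. norm (g y)"]
      by (simp add: norm_mult)
    show "AE x in lborel. integrable lborel (\<lambda>y. f (fst (x, y)) * g (snd (x, y)))"
      using integrable_mult_right[OF g] by simp
  qed
  then show "integrable lborel (\<lambda>y::real \<times> real. f (fst y) * g (snd y))" by (simp add: lborel_pair)
  have "(LINT y|(lborel \<Otimes>\<^sub>M lborel). f (fst y) * g (snd y)) = (LINT x|lborel. LINT y|lborel. f x * g y)"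
    using lborel_pair.integral_fst'[OF int] by simp
  then show "(LINT y|lborel. f (fst y) * g (snd y)) = (LINT x|lborel. f x) * (LINT x|lborel. g x)"
    by (simp add: lborel_pair)
qed

lemma integral_cos_pair_product:
  assumes h1: "integrable lborel h1" and h2: "integrable lborel h2"
  shows "(LINT y|lborel. h1 (fst y) * h2 (snd y) * complex_of_real (cos (r * (w \<bullet> y)))) =
     even_tensor (\<lambda>t. fourier h1 (r * t)) (\<lambda>t. fourier h2 (r * t)) (fst w) (snd w) / 2"
proof -
  let ?E = "\<lambda>h a t. h t * cis (- (a * t))"
  have int: "integrable lborel (\<lambda>y::real \<times> real. ?E h1 a (fst y) * ?E h2 b (snd y))" for a b
    by (intro integrable_lborel_pair_product integrable_fourier_integrand h1 h2)
  have pointwise: "h1 (fst y) * h2 (snd y) * complex_of_real (cos (r * (w \<bullet> y))) =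
      (?E h1 (r * fst w) (fst y) * ?E h2 (r * snd w) (snd y)
       + ?E h1 (- (r * fst w)) (fst y) * ?E h2 (- (r * snd w)) (snd y)) / 2" for y
  proof -
    let ?\<phi> = "r * (w \<bullet> y)"
    have "cis (- (r * fst w * fst y)) * cis (- (r * snd w * snd y)) = cis (- ?\<phi>)"
      "cis (r * fst w * fst y) * cis (r * snd w * snd y) = cis ?\<phi>"
      by (cases w, cases y, simp add: cis_mult algebra_simps)+
    then have "(?E h1 (r * fst w) (fst y) * ?E h2 (r * snd w) (snd y)
       + ?E h1 (- (r * fst w)) (fst y) * ?E h2 (- (r * snd w)) (snd y)) / 2
      = h1 (fst y) * h2 (snd y) * ((cis ?\<phi> + cis (- ?\<phi>)) / 2)"
      by (simp add: field_simps)
    also have "(cis ?\<phi> + cis (- ?\<phi>)) / 2 = complex_of_real (cos ?\<phi>)"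
      by (simp add: complex_eq_iff)
    finally show ?thesis by simp
  qed
  then have "(LINT y|lborel. h1 (fst y) * h2 (snd y) * complex_of_real (cos (r * (w \<bullet> y)))) =
      ((LINT y|lborel. ?E h1 (r * fst w) (fst y) * ?E h2 (r * snd w) (snd y))
       + (LINT y|lborel. ?E h1 (- (r * fst w)) (fst y) * ?E h2 (- (r * snd w)) (snd y))) / 2"
    by (simp only: pointwise integral_divide_zero Bochner_Integration.integral_add[OF int int])
  also have "\<dots> = even_tensor (\<lambda>t. fourier h1 (r * t)) (\<lambda>t. fourier h2 (r * t)) (fst w) (snd w) / 2"
    unfolding lborel_integral_pair_product[OF integrable_fourier_integrand[OF h1] integrable_fourier_integrand[OF h2]]
    by (simp add: even_tensor_def fourier_def)
  finally show ?thesis .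
qed

lemma integral_fourier_tent:
  fixes h :: "'a::euclidean_space \<Rightarrow> complex"
  assumes h: "integrable lborel h" and r: "r \<noteq> 0"
  shows "(LINT y|lborel. h y * fourier (\<lambda>\<kappa>. complex_of_real (max 0 (\<bar>w \<bullet> y\<bar> - \<bar>\<kappa>\<bar>))) r) =
    complex_of_real (2 / r\<^sup>2) * (LINT y|lborel. h y)
    - complex_of_real (2 / r\<^sup>2) * (LINT y|lborel. h y * complex_of_real (cos (r * (w \<bullet> y))))"
proof -
  have [measurable]: "h \<in> borel_measurable borel" using borel_measurable_integrable[OF h] by simp
  have "continuous_on UNIV (\<lambda>y. complex_of_real (cos (r * (w \<bullet> y))))" by (intro continuous_intros)
  then have [measurable]: "(\<lambda>y. complex_of_real (cos (r * (w \<bullet> y)))) \<in> borel_measurable borel"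
    by (rule borel_measurable_continuous_onI)
  have hcos: "integrable lborel (\<lambda>y. h y * complex_of_real (cos (r * (w \<bullet> y))))"
  proof (rule Bochner_Integration.integrable_bound[OF integrable_norm[OF h]])
    show "(\<lambda>y. h y * complex_of_real (cos (r * (w \<bullet> y)))) \<in> borel_measurable lborel" by measurable
    show "AE y in lborel. norm (h y * complex_of_real (cos (r * (w \<bullet> y)))) \<le> norm (norm (h y))"
      by (intro AE_I2) (simp add: norm_mult mult_left_le)
  qed
  have "h y * fourier (\<lambda>\<kappa>. complex_of_real (max 0 (\<bar>w \<bullet> y\<bar> - \<bar>\<kappa>\<bar>))) r =
      complex_of_real (2 / r\<^sup>2) * h y - complex_of_real (2 / r\<^sup>2) * (h y * complex_of_real (cos (r * (w \<bullet> y))))" for y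
  proof -
    have "cos (r * \<bar>w \<bullet> y\<bar>) = cos (r * (w \<bullet> y))" by (simp add: abs_if)
    then show ?thesis by (simp add: fourier_tent[OF r abs_ge_zero] algebra_simps diff_divide_distrib)
  qed
  then show ?thesis
    by (simp only: Bochner_Integration.integral_diff integrable_mult_right h hcos integral_mult_right_zero)
qed

theorem mainTheorem12:
  fixes h1 h2 :: "real \<Rightarrow> complex" and r :: real
    and h :: "real \<times> real \<Rightarrow> complex"
    and \<psi> \<theta> g :: "real \<times> real \<Rightarrow> complex"
  assumes "r \<noteq> 0" and "schwartz h1" and "schwartz h2"
    and "h = (\<lambda>y. h1 (fst y) * h2 (snd y))"
    and "\<psi> = (\<lambda>w. LINT y|lborel. h y *
               fourier (\<lambda>\<kappa>. complex_of_real (max 0 (\<bar>w \<bullet> y\<bar> - \<bar>\<kappa>\<bar>))) r)"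
    and "\<theta> = (\<lambda>w. \<psi> w - Lim at_infinity \<psi>)"
    and "g = (\<lambda>w. complex_of_real (2 / r\<^sup>2) *
               (LINT y|lborel. h y * complex_of_real (cos (r * (w \<bullet> y)))))"
  shows "(\<exists>L. (\<psi> \<longlongrightarrow> L) at_infinity) \<and> \<theta> \<in> Se_sep \<and>
         T2 \<theta> - \<theta> (0, 0) = complex_of_real (2 / r\<^sup>2) * (LINT y|lborel. h y) - T2 g"
proof -
  note r = assms(1) and h1 = assms(2) and h2 = assms(3)
  define A where "A t = fourier h1 (r * t)" for t
  define B where "B t = fourier h2 (r * t)" for t
  have A: "schwartz A" and B: "schwartz B"
    unfolding A_def B_def using schwartz_scale[OF schwartz_fourier r] h1 h2 by auto
  define c where "c = complex_of_real (1 / r\<^sup>2)"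
  define L where "L = complex_of_real (2 / r\<^sup>2) * (LINT y|lborel. h y)"
  have g: "g = (\<lambda>w. c * even_tensor A B (fst w) (snd w))"
    unfolding assms(4,7) integral_cos_pair_product[OF schwartz_integrable[OF h1] schwartz_integrable[OF h2]]
    by (simp add: A_def[abs_def] B_def[abs_def] c_def)
  have \<psi>: "\<psi> = (\<lambda>w. L - g w)"
    unfolding assms(4,5,7) L_def
      integral_fourier_tent[OF integrable_lborel_pair_product[OF schwartz_integrable[OF h1]
        schwartz_integrable[OF h2]] r] ..
  have lim: "(\<psi> \<longlongrightarrow> L) at_infinity"
    using tendsto_diff[OF tendsto_const[of L] tendsto_mult_right_zero[OF
      even_tensor_tendsto_0[OF schwartz_rapid_decay[OF A] schwartz_rapid_decay[OF B]]]]
    by (simp add: \<psi> g)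
  then have "Lim at_infinity \<psi> = L" by (rule tendsto_Lim[OF trivial_limit_at_infinity])
  then have \<theta>: "\<theta> = (\<lambda>w. - g w)"
    by (simp add: assms(6) \<psi>)
  have "\<theta> \<in> Se_sep"
    using even_tensor_in_Se_sep[OF A B, of "- c"] by (simp add: \<theta> g)
  moreover have "T2 \<theta> = - T2 g"
    unfolding \<theta> g by (rule T2_uminus_even_tensor[OF A B])
  moreover have "g (0, 0) = L" by (simp add: assms(7) L_def flip: zero_prod_def)
  ultimately show ?thesis
    using lim by (auto simp: \<theta> L_def)
qed

end
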